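(* Let $A$ be a symmetric skew domain whose boundary paths $P,Q$ are each crossed by $2n$ edges, and let $\sigma\in B_n$. Then in $\mathcal{H}$, \[ T_\sigma Y_A=\sum_{\pi\in B_n}P_A^{\sigma,\pi}\,T_\pi . \]
   Context: $B_n$ is the group of signed permutations of $\pm[1,n]=\{-n,\dots,-1,1,\dots,n\}$ ($\pi(-i)=-\pi(i)$), a Coxeter group with generators $s_0=(-1\ 1)$ and $s_k=(k\ k+1)(-k\ -k-1)$, $1\le k\le n-1$; $l(\pi)$ is the Coxeter length. With formal variables $q,t,\nu,z_1,z_2,\dots$, and $q_0=t$, $q_k=q$ for $k\ge1$, the type $B$ Hecke algebra $\mathcal{H}$ is the algebra over $\mathbb{C}(q,t,\nu,\mathbf z)$ with basis $\{T_w\}_{w\in B_n}$, $T_{\mathrm{id}}=1$, and relations $T_uT_w=T_{uw}$ if $l(uw)=l(u)+l(w)$ and $(T_k+q_k)(T_k-1)=0$ where $T_k=T_{s_k}$. For $p$ a scalar let $R_k(p)=pT_k+(1-p)$. Set $p_{x,y}=\frac{z_xz_y-1}{z_xz_y-q}$ for $x\neq y$ and $p_{x,x}=\frac{z_x^2-1}{(z_x-\nu t)(z_x+1/\nu)}$. A symmetric skew domain $A$ is a finite set of lattice points invariant under $(x,y)\mapsto(y,x)$, consisting of the vertices between two up-left lattice paths $P$ (southwest) and $Q$ (northeast), each invariant under this reflection and each crossed by $2n$ lattice edges; the edges crossing $P$ (resp. $Q$) are labeled $-n,\dots,-1,1,\dots,n$ in increasing order moving up-left. $A^+=\{(x,y)\in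 A: x\le y\}$ and $Y_A=\prod_{(x,y)\in A^+}R_{y-x}(p_{x,y})$, the product taken in an order in which the factor for $(x,y)$ precedes that for $(x',y')\neq(x,y)$ whenever $x\le x'$, $y\le y'$ (this is independent of the chosen order). $P_A^{\sigma,\pi}$ denotes the probability (a rational function of the parameters) in the colored half-space stochastic six-vertex model restricted to $A$, with color $\sigma(j)$ entering through edge $j$ of $P$, that color $\pi(j)$ exits through edge $j$ of $Q$ for every $j$. The vertex rule at $(x,y)\in A^+$: for incoming colors $i<j$, if $j$ enters from the left and $i$ from below they go straight ($j$ right, $i$ up) with probability $p_{x,y}$ and turn otherwise; if $j$ enters from below and $i$ from the left they go straight with probability $q_{y-x}p_{x,y}$ and turn otherwise; the outcome at $(y,x)$ is the mirror image with all colors negated. *)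

theory Defs
  imports Main "HOL-Library.FuncSet"
begin

section \<open>The hyperoctahedral group B_n as signed permutations of +-[1,n]\<close>

definition pm_set :: "nat \<Rightarrow> int set" where
  "pm_set n = {-int n..int n} - {0}"

definition signed_perms :: "nat \<Rightarrow> (int \<Rightarrow> int) set" where
  "signed_perms n = {\<pi>. bij_betw \<pi> (pm_set n) (pm_set n) \<and> (\<forall>i. \<pi> (-i) = - \<pi> i)
                          \<and> (\<forall>i. i \<notin> pm_set n \<longrightarrow> \<pi> i = i)}"

text \<open>Coxeter generators: s_0 = (-1 1), s_k = (k k+1)(-k -k-1).\<close>
definition gen :: "nat \<Rightarrow> int \<Rightarrow> int" where
  "gen k i = (if k = 0 then (if i = 1 then -1 else if i = -1 then 1 else i)
              else (if i = int k then int k + 1 else if i = int k + 1 then int k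
                    else if i = - int k then - int k - 1 else if i = - int k - 1 then - int k
                    else i))"

text \<open>Coxeter length: minimal length of a word in s_0,...,s_(n-1); the group law is composition.\<close>
definition clen :: "nat \<Rightarrow> (int \<Rightarrow> int) \<Rightarrow> nat" where
  "clen n w = (LEAST m. \<exists>ks. length ks = m \<and> set ks \<subseteq> {0..<n}
                           \<and> w = foldr (\<lambda>k f. gen k \<circ> f) ks id)"

text \<open>An element h of the Hecke algebra is the coefficient function w |-> coefficient of T_w
  (supported on B_n). Tb w is the basis element T_w.\<close>
definition Tb :: "(int \<Rightarrow> int) \<Rightarrow> (int \<Rightarrow> int) \<Rightarrow> 'a::field" where
  "Tb w v = (if v = w then 1 else 0)"

definition qpar :: "'a::field \<Rightarrow> 'a \<Rightarrow> nat \<Rightarrow> 'a" where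
  "qpar q t k = (if k = 0 then t else q)"

text \<open>Right multiplication h |-> h T_k, determined by the defining relations:
  T_w T_k = T_(w s_k) if l(w s_k) > l(w), and = (1-q_k) T_w + q_k T_(w s_k) otherwise.\<close>
definition rmulT :: "nat \<Rightarrow> 'a::field \<Rightarrow> 'a \<Rightarrow> nat \<Rightarrow> ((int \<Rightarrow> int) \<Rightarrow> 'a) \<Rightarrow> ((int \<Rightarrow> int) \<Rightarrow> 'a)" where
  "rmulT n q t k h = (\<lambda>v. if clen n (v \<circ> gen k) < clen n v
                          then h (v \<circ> gen k) + (1 - qpar q t k) * h v
                          else qpar q t k * h (v \<circ> gen k))"

definition rmulR :: "nat \<Rightarrow> 'a::field \<Rightarrow> 'a \<Rightarrow> nat \<Rightarrow> 'a \<Rightarrow> ((int \<Rightarrow> int) \<Rightarrow> 'a) \<Rightarrow> ((int \<Rightarrow> int) \<Rightarrow> 'a)" where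
  "rmulR n q t k p h = (\<lambda>v. p * rmulT n q t k h v + (1 - p) * h v)"

definition pxy :: "'a::field \<Rightarrow> 'a \<Rightarrow> 'a \<Rightarrow> (int \<Rightarrow> 'a) \<Rightarrow> int \<Rightarrow> int \<Rightarrow> 'a" where
  "pxy q t \<nu> z x y = (if x = y then (z x ^ 2 - 1) / ((z x - \<nu> * t) * (z x + 1 / \<nu>))
                     else (z x * z y - 1) / (z x * z y - q))"

text \<open>Lattice edges, named by their head vertex: HE x y is the horizontal edge (x-1,y) -> (x,y),
  VE x y is the vertical edge (x,y-1) -> (x,y).\<close>
datatype edge = HE int int | VE int int

fun mir :: "edge \<Rightarrow> edge" where
  "mir (HE x y) = VE y x"
| "mir (VE x y) = HE y x"

text \<open>An up-left path on the dual lattice with 2n steps. A dual point (a,b) stands for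
  (a+1/2, b+1/2). The path starts at (a0, a0 - n) and its step list s has True = up, False = left.
  An up step from (a,b) crosses HE (a+1) (b+1); a left step from (a,b) crosses VE a (b+1).\<close>
definition cntL :: "bool list \<Rightarrow> nat \<Rightarrow> int" where
  "cntL s i = int (length (filter Not (take i s)))"
definition cntU :: "bool list \<Rightarrow> nat \<Rightarrow> int" where
  "cntU s i = int (length (filter id (take i s)))"

definition dual_a :: "int \<Rightarrow> bool list \<Rightarrow> nat \<Rightarrow> int" where
  "dual_a a0 s i = a0 - cntL s i"
definition dual_b :: "int \<Rightarrow> nat \<Rightarrow> bool list \<Rightarrow> nat \<Rightarrow> int" where
  "dual_b a0 n s i = a0 - int n + cntU s i"

definition step_edge :: "int \<Rightarrow> nat \<Rightarrow> bool list \<Rightarrow> nat \<Rightarrow> edge" where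
  "step_edge a0 n s i = (if s ! i then HE (dual_a a0 s i + 1) (dual_b a0 n s i + 1)
                         else VE (dual_a a0 s i) (dual_b a0 n s i + 1))"

text \<open>Labels -n,...,-1,1,...,n of the crossing edges in increasing order moving up-left.\<close>
definition label_idx :: "nat \<Rightarrow> int \<Rightarrow> nat" where
  "label_idx n j = (if j < 0 then nat (int n + j) else nat (int n + j - 1))"

definition path_edge :: "int \<Rightarrow> nat \<Rightarrow> bool list \<Rightarrow> int \<Rightarrow> edge" where
  "path_edge a0 n s j = step_edge a0 n s (label_idx n j)"

text \<open>Invariance of the path under (x,y) |-> (y,x).\<close>
definition sym_path :: "nat \<Rightarrow> bool list \<Rightarrow> bool" where
  "sym_path n s \<longleftrightarrow> length s = 2 * n \<and> (\<forall>i < 2 * n. s ! i = (\<not> s ! (2 * n - 1 - i)))"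

text \<open>P (southwest) and Q (northeast) have common endpoints and Q lies weakly northeast of P.\<close>
definition skew_domain :: "nat \<Rightarrow> bool list \<Rightarrow> bool list \<Rightarrow> bool" where
  "skew_domain n P Q \<longleftrightarrow> sym_path n P \<and> sym_path n Q \<and> (\<forall>i \<le> 2 * n. cntL Q i \<le> cntL P i)"

definition skew_dom :: "int \<Rightarrow> nat \<Rightarrow> bool list \<Rightarrow> bool list \<Rightarrow> (int \<times> int) set" where
  "skew_dom a0 n P Q = {(x, y). \<exists>i \<le> 2 * n. y - x = int i - int n
                          \<and> dual_a a0 P i < x \<and> x \<le> dual_a a0 Q i}"

definition domp :: "int \<Rightarrow> nat \<Rightarrow> bool list \<Rightarrow> bool list \<Rightarrow> (int \<times> int) set" where
  "domp a0 n P Q = {(x, y) \<in> skew_dom a0 n P Q. x \<le> y}"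

definition dom_edges :: "int \<Rightarrow> nat \<Rightarrow> bool list \<Rightarrow> bool list \<Rightarrow> edge set" where
  "dom_edges a0 n P Q =
     path_edge a0 n P ` pm_set n \<union> path_edge a0 n Q ` pm_set n
     \<union> {HE x y | x y. (x - 1, y) \<in> skew_dom a0 n P Q \<and> (x, y) \<in> skew_dom a0 n P Q}
     \<union> {VE x y | x y. (x, y - 1) \<in> skew_dom a0 n P Q \<and> (x, y) \<in> skew_dom a0 n P Q}"

definition vweight :: "'a::field \<Rightarrow> 'a \<Rightarrow> 'a \<Rightarrow> (int \<Rightarrow> 'a) \<Rightarrow> (edge \<Rightarrow> int) \<Rightarrow> int \<times> int \<Rightarrow> 'a" where
  "vweight q t \<nu> z c v = (case v of (x, y) \<Rightarrow>
     (let l = c (HE x y); b = c (VE x y); r = c (HE (x + 1) y); u = c (VE x (y + 1));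
          p = pxy q t \<nu> z x y; qk = qpar q t (nat (y - x)) in
      if l = b then 0
      else if b < l then
        (if r = l \<and> u = b then p else if r = b \<and> u = l then 1 - p else 0)
      else
        (if r = l \<and> u = b then qk * p else if r = b \<and> u = l then 1 - qk * p else 0)))"

text \<open>Probability P_A^(sigma,pi): sum over all colourings of the edges of the domain that are
  compatible with the symmetry (colour at mirrored edge is negated) and the boundary data,
  of the product of vertex weights over A^+ (the vertices in the lower half being forced).\<close>
definition Pprob :: "'a::field \<Rightarrow> 'a \<Rightarrow> 'a \<Rightarrow> (int \<Rightarrow> 'a) \<Rightarrow> int \<Rightarrow> nat \<Rightarrow> bool list \<Rightarrow> bool list
                     \<Rightarrow> (int \<Rightarrow> int) \<Rightarrow> (int \<Rightarrow> int) \<Rightarrow> 'a" where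
  "Pprob q t \<nu> z a0 n P Q \<sigma> \<pi> =
     (\<Sum>c \<in> {c \<in> Pi\<^sub>E (dom_edges a0 n P Q) (\<lambda>_. pm_set n).
               (\<forall>e \<in> dom_edges a0 n P Q. c (mir e) = - c e)
             \<and> (\<forall>j \<in> pm_set n. c (path_edge a0 n P j) = \<sigma> j \<and> c (path_edge a0 n Q j) = \<pi> j)}.
        \<Prod>v \<in> domp a0 n P Q. vweight q t \<nu> z c v)"

definition admissible_order :: "(int \<times> int) set \<Rightarrow> (int \<times> int) list \<Rightarrow> bool" where
  "admissible_order S L \<longleftrightarrow> distinct L \<and> set L = S \<and>
     (\<forall>i < length L. \<forall>j < length L. fst (L ! i) \<le> fst (L ! j) \<and> snd (L ! i) \<le> snd (L ! j) \<longrightarrow> i \<le> j)"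

text \<open>h * Y_A, where Y_A is the ordered product of R_(y-x)(p_(x,y)) along L.\<close>
definition mulY :: "nat \<Rightarrow> 'a::field \<Rightarrow> 'a \<Rightarrow> 'a \<Rightarrow> (int \<Rightarrow> 'a) \<Rightarrow> (int \<times> int) list
                    \<Rightarrow> ((int \<Rightarrow> int) \<Rightarrow> 'a) \<Rightarrow> ((int \<Rightarrow> int) \<Rightarrow> 'a)" where
  "mulY n q t \<nu> z L h = foldl (\<lambda>g (x, y). rmulR n q t (nat (y - x)) (pxy q t \<nu> z x y) g) h L"

end

theory Submission
  imports Defs
begin

text \<open>Induction along the admissible order. Its last vertex \<open>(x, y)\<close> is a corner of \<open>A\<^sup>+\<close>;
  removing it together with its mirror image \<open>(y, x)\<close> leaves a symmetric skew domain \<open>A'\<close> whose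
  northeast boundary \<open>Q'\<close> differs from \<open>Q\<close> by two flipped corners. Conditioning on the colours with
  which the paths leave \<open>A'\<close> through \<open>Q'\<close> writes \<open>P\<^sub>A\<^sup>\<sigma>\<^sup>,\<^sup>\<pi>\<close> as \<open>\<Sum>\<^sub>\<pi>\<^sub>' P\<^sub>A\<^sub>'\<^sup>\<sigma>\<^sup>,\<^sup>\<pi>\<^sup>'\<close> times the weight of the vertex
  \<open>(x, y)\<close>, whose incoming edges carry the two labels exchanged by \<open>s\<^sub>k\<close>, \<open>k = y - x\<close>.
  That weight is exactly the coefficient of \<open>T\<^sub>\<pi>\<close> in \<open>T\<^sub>\<pi>\<^sub>' R\<^sub>k(p\<^sub>x\<^sub>,\<^sub>y)\<close>: which Hecke relation applies
  depends on whether \<open>\<pi>\<close> has a descent at \<open>k\<close>, and the descent criterion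
  \<open>l(\<pi> s\<^sub>k) < l(\<pi>) \<longleftrightarrow> \<pi>(k + 1) < \<pi>(k)\<close> follows from the expression of \<open>2 l(\<pi>)\<close> as the number of
  inversions of \<open>\<pi>\<close> on \<open>\<plusminus>[1, n]\<close> plus the number of negative values \<open>\<pi>(1), \<dots>, \<pi>(n)\<close>.\<close>

section \<open>Signed permutations and their Coxeter length\<close>

lemma pm_set_iff: "a \<in> pm_set n \<longleftrightarrow> a \<noteq> 0 \<and> - int n \<le> a \<and> a \<le> int n"
  by (auto simp: pm_set_def)

lemma finite_pm_set [simp]: "finite (pm_set n)"
  by (simp add: pm_set_def)

lemma uminus_in_pm_set: "a \<in> pm_set n \<Longrightarrow> - a \<in> pm_set n"
  by (auto simp: pm_set_iff)

lemma signed_permsD: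
  assumes "\<pi> \<in> signed_perms n"
  shows "bij_betw \<pi> (pm_set n) (pm_set n)" "\<pi> (- i) = - \<pi> i" "i \<notin> pm_set n \<Longrightarrow> \<pi> i = i"
  using assms by (auto simp: signed_perms_def)

lemma signed_perm_in_pm_set: "\<pi> \<in> signed_perms n \<Longrightarrow> a \<in> pm_set n \<Longrightarrow> \<pi> a \<in> pm_set n"
  using signed_permsD(1) bij_betwE by blast

lemma signed_perm_inj:
  "\<pi> \<in> signed_perms n \<Longrightarrow> a \<in> pm_set n \<Longrightarrow> b \<in> pm_set n \<Longrightarrow> \<pi> a = \<pi> b \<Longrightarrow> a = b"
  by (metis signed_permsD(1) bij_betw_imp_inj_on inj_onD)

lemma signed_perms_eqI:
  assumes "\<pi> \<in> signed_perms n" "\<rho> \<in> signed_perms n" "\<And>j. j \<in> pm_set n \<Longrightarrow> \<pi> j = \<rho> j"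
  shows "\<pi> = \<rho>"
  using assms signed_permsD(3) by (metis ext)

lemma id_signed_perms: "id \<in> signed_perms n"
  by (auto simp: signed_perms_def)

lemma comp_signed_perms: "\<pi> \<in> signed_perms n \<Longrightarrow> \<rho> \<in> signed_perms n \<Longrightarrow> \<pi> \<circ> \<rho> \<in> signed_perms n"
  unfolding signed_perms_def by (auto intro: bij_betw_trans)

lemma finite_signed_perms: "finite (signed_perms n)"
proof -
  have "inj_on (\<lambda>\<pi>. restrict \<pi> (pm_set n)) (signed_perms n)"
    by (rule inj_onI) (metis signed_perms_eqI restrict_apply')
  moreover have "(\<lambda>\<pi>. restrict \<pi> (pm_set n)) ` signed_perms n \<subseteq> Pi\<^sub>E (pm_set n) (\<lambda>_. pm_set n)"
    using signed_perm_in_pm_set by auto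
  ultimately show ?thesis
    by (metis finite_PiE finite_pm_set finite_imageD finite_subset)
qed

lemma odd_fun_eqI:
  assumes "\<And>i. f (- i) = - f i" "\<And>i. g (- i) = - g i" "f a = g a" "f b = g b"
    and "\<And>j. j \<notin> {a, b, - a, - b} \<Longrightarrow> f j = g j"
  shows "f = g"
proof
  fix j
  show "f j = g j"
    using assms(1)[of a] assms(1)[of b] assms(2)[of a] assms(2)[of b] assms(3,4) assms(5)[of j]
    by (cases "j \<in> {a, b, - a, - b}") auto
qed

text \<open>\<open>s\<^sub>k\<close> exchanges \<open>gen_lo k\<close> with \<open>gen_hi k\<close> and \<open>-gen_lo k\<close> with \<open>-gen_hi k\<close>.\<close>
definition gen_lo :: "nat \<Rightarrow> int" where "gen_lo k = (if k = 0 then -1 else int k)"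
definition gen_hi :: "nat \<Rightarrow> int" where "gen_hi k = int k + 1"

lemma gen_gen [simp]: "gen k (gen k i) = i"
  by (auto simp: gen_def)

lemma comp_gen_gen [simp]: "\<pi> \<circ> gen k \<circ> gen k = \<pi>"
  by (auto simp: fun_eq_iff)

lemma gen_gen_lo [simp]: "gen k (gen_lo k) = gen_hi k"
  and gen_gen_hi [simp]: "gen k (gen_hi k) = gen_lo k"
  by (auto simp: gen_def gen_lo_def gen_hi_def)

lemma gen_uminus: "gen k (- i) = - gen k i"
  by (auto simp: gen_def)

lemma gen_fixes: "j \<notin> {gen_lo k, gen_hi k, - gen_lo k, - gen_hi k} \<Longrightarrow> gen k j = j"
  by (cases "k = 0") (auto simp: gen_def gen_lo_def gen_hi_def)

lemma gen_lo_ne_hi [simp]: "gen_lo k \<noteq> gen_hi k"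
  by (auto simp: gen_lo_def gen_hi_def)

lemma gen_lo_hi_in_pm_set:
  "k < n \<Longrightarrow> gen_lo k \<in> pm_set n \<and> gen_hi k \<in> pm_set n"
  by (auto simp: gen_lo_def gen_hi_def pm_set_iff)

lemma gen_signed_perms: "k < n \<Longrightarrow> gen k \<in> signed_perms n"
proof -
  assume k: "k < n"
  have "bij_betw (gen k) (pm_set n) (pm_set n)"
    by (rule bij_betwI[where g = "gen k"]) (use k in \<open>auto simp: gen_def pm_set_iff\<close>)
  moreover have "i \<notin> pm_set n \<Longrightarrow> gen k i = i" for i
    using k by (auto simp: gen_def pm_set_iff)
  ultimately show ?thesis by (auto simp: signed_perms_def gen_uminus)
qed

lemma signed_perm_lo_ne_hi: "\<pi> \<in> signed_perms n \<Longrightarrow> k < n \<Longrightarrow> \<pi> (gen_lo k) \<noteq> \<pi> (gen_hi k)"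
  by (metis signed_perm_inj gen_lo_hi_in_pm_set gen_lo_ne_hi)

lemma reindex_gen:
  assumes "k < n"
  shows "(\<Sum>a\<in>pm_set n. f (gen k a)) = (\<Sum>a\<in>pm_set n. f a :: int)"
  using signed_permsD(1)[OF gen_signed_perms[OF assms]] by (rule sum.reindex_bij_betw)

definition inversions :: "nat \<Rightarrow> (int \<Rightarrow> int) \<Rightarrow> int" where
  "inversions n \<pi> = (\<Sum>a\<in>pm_set n. \<Sum>b\<in>pm_set n. if a < b \<and> \<pi> b < \<pi> a then 1 else 0)"

definition negatives :: "nat \<Rightarrow> (int \<Rightarrow> int) \<Rightarrow> int" where
  "negatives n \<pi> = (\<Sum>a\<in>{1..int n}. if \<pi> a < 0 then 1 else 0)"

lemma gen_less_gen_iff: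
  assumes "a \<noteq> 0" "b \<noteq> 0"
    and "(a, b) \<notin> {(gen_lo k, gen_hi k), (gen_hi k, gen_lo k), (- gen_hi k, - gen_lo k), (- gen_lo k, - gen_hi k)}"
  shows "gen k a < gen k b \<longleftrightarrow> a < b"
proof (cases "k = 0")
  case True
  then show ?thesis
    using assms unfolding gen_def gen_lo_def gen_hi_def by (simp split: if_splits) linarith+
next
  case False
  then show ?thesis
    using assms unfolding gen_def gen_lo_def gen_hi_def by (simp split: if_splits) presburger
qed

text \<open>Only the pairs \<open>(gen_lo k, gen_hi k)\<close> and \<open>(-gen_hi k, -gen_lo k)\<close> change their inversion status,
  and for \<open>k = 0\<close> these coincide.\<close>
lemma inversions_comp_gen:
  assumes k: "k < n" and \<pi>: "\<pi> \<in> signed_perms n"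
  shows "inversions n (\<pi> \<circ> gen k)
       = inversions n \<pi> + (if k = 0 then 1 else 2) * (if \<pi> (gen_lo k) < \<pi> (gen_hi k) then 1 else -1)"
proof -
  define S where "S = {(gen_lo k, gen_hi k), (gen_hi k, gen_lo k), (- gen_hi k, - gen_lo k), (- gen_lo k, - gen_hi k)}"
  define D where "D ab = (if gen k (fst ab) < gen k (snd ab) \<and> \<pi> (snd ab) < \<pi> (fst ab) then 1 else 0)
                       - (if fst ab < snd ab \<and> \<pi> (snd ab) < \<pi> (fst ab) then 1 else (0::int))" for ab
  define F where "F a b = (if gen k a < gen k b \<and> \<pi> b < \<pi> a then 1 else (0::int))" for a b
  have "inversions n (\<pi> \<circ> gen k) = (\<Sum>a\<in>pm_set n. \<Sum>b\<in>pm_set n. F (gen k a) (gen k b))"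
    by (simp add: inversions_def F_def)
  also have "\<dots> = (\<Sum>a\<in>pm_set n. \<Sum>b\<in>pm_set n. F (gen k a) b)"
    by (intro sum.cong refl reindex_gen[OF k, where f = "\<lambda>b. F _ b"])
  also have "\<dots> = (\<Sum>a\<in>pm_set n. \<Sum>b\<in>pm_set n. F a b)"
    by (rule reindex_gen[OF k, where f = "\<lambda>a. \<Sum>b\<in>pm_set n. F a b"])
  also have "\<dots> = inversions n \<pi> + (\<Sum>ab\<in>pm_set n \<times> pm_set n. D ab)"
  proof -
    have "(\<Sum>a\<in>pm_set n. \<Sum>b\<in>pm_set n. F a b) - inversions n \<pi> = (\<Sum>a\<in>pm_set n. \<Sum>b\<in>pm_set n. D (a, b))"
      unfolding inversions_def sum_subtractf[symmetric] by (intro sum.cong refl) (simp add: F_def D_def)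
    then show ?thesis by (simp add: sum.cartesian_product)
  qed
  also have "(\<Sum>ab\<in>pm_set n \<times> pm_set n. D ab) = (\<Sum>ab\<in>S. D ab)"
  proof (rule sum.mono_neutral_right)
    show "S \<subseteq> pm_set n \<times> pm_set n"
      using k by (auto simp: S_def gen_lo_def gen_hi_def pm_set_iff)
    show "\<forall>ab\<in>pm_set n \<times> pm_set n - S. D ab = 0"
    proof
      fix ab
      assume "ab \<in> pm_set n \<times> pm_set n - S"
      then show "D ab = 0"
        using gen_less_gen_iff[of "fst ab" "snd ab" k] by (auto simp: D_def pm_set_iff S_def)
    qed
  qed simp
  also have "\<dots> = (if k = 0 then 1 else 2) * (if \<pi> (gen_lo k) < \<pi> (gen_hi k) then 1 else -1)"
  proof (cases "k = 0")
    case True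
    then have "S = {(-1, 1), (1, -1)}" by (auto simp: S_def gen_lo_def gen_hi_def)
    then show ?thesis using True signed_perm_lo_ne_hi[OF \<pi> k]
      by (auto simp: D_def gen_def gen_lo_def gen_hi_def)
  next
    case False
    then have "S = {(int k, int k + 1), (int k + 1, int k), (- int k - 1, - int k), (- int k, - int k - 1)}"
      by (auto simp: S_def gen_lo_def gen_hi_def)
    moreover have "\<pi> (- int k - 1) = - \<pi> (int k + 1)"
      using signed_permsD(2)[OF \<pi>, of "int k + 1"] by simp
    ultimately show ?thesis using False signed_perm_lo_ne_hi[OF \<pi> k]
      by (auto simp: D_def gen_def gen_lo_def gen_hi_def signed_permsD(2)[OF \<pi>])
  qed
  finally show ?thesis .
qed

lemma negatives_comp_gen:
  assumes k: "k < n"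
  shows "negatives n (\<pi> \<circ> gen k)
       = negatives n \<pi> + (if k = 0 then (if \<pi> (-1) < 0 then 1 else 0) - (if \<pi> 1 < 0 then 1 else 0) else 0)"
proof (cases "k = 0")
  case True
  have "{1..int n} = insert 1 {2..int n}" using k by auto
  moreover have "(\<Sum>a\<in>{2..int n}. if (\<pi> \<circ> gen k) a < 0 then 1 else 0)
               = (\<Sum>a\<in>{2..int n}. if \<pi> a < 0 then 1 else (0::int))"
    using True by (intro sum.cong refl) (auto simp: gen_def)
  ultimately show ?thesis using True by (simp add: negatives_def gen_def)
next
  case False
  have "bij_betw (gen k) {1..int n} {1..int n}"
    by (rule bij_betwI[where g = "gen k"]) (use False k in \<open>auto simp: gen_def\<close>)
  then show ?thesis
    using False sum.reindex_bij_betw[of "gen k", where g = "\<lambda>a. if \<pi> a < 0 then 1 else (0::int)"]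
    by (simp add: negatives_def)
qed

lemma length_count_comp_gen:
  assumes k: "k < n" and \<pi>: "\<pi> \<in> signed_perms n"
  shows "inversions n (\<pi> \<circ> gen k) + negatives n (\<pi> \<circ> gen k)
       = inversions n \<pi> + negatives n \<pi> + (if \<pi> (gen_lo k) < \<pi> (gen_hi k) then 2 else -2)"
proof -
  have "\<pi> 1 \<noteq> 0"
    using signed_perm_in_pm_set[OF \<pi>, of 1] k by (auto simp: pm_set_iff)
  then show ?thesis
    using inversions_comp_gen[OF k \<pi>] negatives_comp_gen[OF k, of \<pi>] signed_permsD(2)[OF \<pi>, of 1]
      signed_perm_lo_ne_hi[OF \<pi> k]
    by (cases "k = 0") (auto simp: gen_lo_def gen_hi_def)
qed

lemma length_count_nonneg: "0 \<le> inversions n \<pi> + negatives n \<pi>"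
  unfolding inversions_def negatives_def by (intro add_nonneg_nonneg sum_nonneg) auto

lemma length_count_id: "inversions n id + negatives n id = 0"
  unfolding inversions_def negatives_def by (auto intro!: sum.neutral)

text \<open>Oddness makes \<open>\<pi> 1 > 0\<close>, so \<open>0 < \<pi> 1 < \<dots> < \<pi> n \<le> n\<close> forces \<open>\<pi> i = i\<close>.\<close>
lemma ascents_imp_id:
  assumes \<pi>: "\<pi> \<in> signed_perms n" and asc: "\<forall>k<n. \<pi> (gen_lo k) < \<pi> (gen_hi k)"
  shows "\<pi> = id"
proof -
  have up: "int j \<le> \<pi> (int j)" if "1 \<le> j" "j \<le> n" for j
    using that
  proof (induction j)
    case (Suc j)
    show ?case
    proof (cases "j = 0")
      case True
      then show ?thesis
        using asc Suc.prems signed_permsD(2)[OF \<pi>, of 1] by (auto simp: gen_lo_def gen_hi_def)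
    next
      case False
      then show ?thesis
        using asc[rule_format, of j] Suc by (auto simp: gen_lo_def gen_hi_def add.commute)
    qed
  qed simp
  have down: "\<pi> (int (n - m)) \<le> int (n - m)" if "m < n" for m
    using that
  proof (induction m)
    case 0
    then show ?case using signed_perm_in_pm_set[OF \<pi>, of "int n"] by (auto simp: pm_set_iff)
  next
    case (Suc m)
    then have "int (n - Suc m) + 1 = int (n - m)" by simp
    then show ?case
      using asc[rule_format, of "n - Suc m"] Suc by (auto simp: gen_lo_def gen_hi_def)
  qed
  have "\<pi> (int j) = int j" if "1 \<le> j" "j \<le> n" for j
    using up[OF that] down[of "n - j"] that by simp
  then have "\<pi> i = i" if "i \<in> pm_set n" "0 < i" for i
  proof -
    obtain j where "i = int j" using \<open>0 < i\<close> by (metis pos_int_cases)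
    then show ?thesis using that \<open>\<And>j. 1 \<le> j \<Longrightarrow> j \<le> n \<Longrightarrow> \<pi> (int j) = int j\<close>
      by (auto simp: pm_set_iff)
  qed
  then have "\<pi> i = id i" if "i \<in> pm_set n" for i
    using that signed_permsD(2)[OF \<pi>, of "- i"] uminus_in_pm_set[of i n]
    by (cases "0 < i") (auto simp: pm_set_iff)
  then show ?thesis
    using signed_perms_eqI[OF \<pi> id_signed_perms] by blast
qed

definition gen_word :: "nat list \<Rightarrow> int \<Rightarrow> int" where
  "gen_word ks = foldr (\<lambda>k f. gen k \<circ> f) ks id"

lemma gen_word_snoc: "gen_word (ks @ [k]) = gen_word ks \<circ> gen k"
proof -
  have "foldr (\<lambda>k f. gen k \<circ> f) ks h = foldr (\<lambda>k f. gen k \<circ> f) ks id \<circ> h" for h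
    by (induction ks) (auto simp: o_assoc)
  then show ?thesis by (simp add: gen_word_def)
qed

lemma gen_word_signed_perms: "set ks \<subseteq> {0..<n} \<Longrightarrow> gen_word ks \<in> signed_perms n"
proof (induction ks rule: rev_induct)
  case Nil
  then show ?case using id_signed_perms by (simp add: gen_word_def id_def)
next
  case (snoc k ks)
  then show ?case unfolding gen_word_snoc by (intro comp_signed_perms gen_signed_perms) auto
qed

lemma length_count_gen_word:
  "set ks \<subseteq> {0..<n} \<Longrightarrow> inversions n (gen_word ks) + negatives n (gen_word ks) \<le> 2 * int (length ks)"
proof (induction ks rule: rev_induct)
  case Nil
  then show ?case using length_count_id by (simp add: gen_word_def id_def)
next
  case (snoc k ks)
  then have "inversions n (gen_word ks \<circ> gen k) + negatives n (gen_word ks \<circ> gen k)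
      \<le> inversions n (gen_word ks) + negatives n (gen_word ks) + 2"
    using length_count_comp_gen[of k n "gen_word ks"] gen_word_signed_perms[of ks n] by auto
  then show ?case
    using snoc unfolding gen_word_snoc by (simp del: o_apply add: comp_def[symmetric])
qed

lemma exists_gen_word:
  "\<pi> \<in> signed_perms n \<Longrightarrow>
   \<exists>ks. set ks \<subseteq> {0..<n} \<and> gen_word ks = \<pi> \<and> 2 * int (length ks) = inversions n \<pi> + negatives n \<pi>"
proof (induction "nat (inversions n \<pi> + negatives n \<pi>)" arbitrary: \<pi> rule: less_induct)
  case less
  show ?case
  proof (cases "\<forall>k<n. \<pi> (gen_lo k) < \<pi> (gen_hi k)")
    case True
    then have "\<pi> = id" using ascents_imp_id less.prems by blast
    then show ?thesis
      by (intro exI[of _ "[]"]) (simp add: gen_word_def length_count_id)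
  next
    case False
    then obtain k where k: "k < n" "\<not> \<pi> (gen_lo k) < \<pi> (gen_hi k)" by blast
    let ?\<rho> = "\<pi> \<circ> gen k"
    have \<rho>: "?\<rho> \<in> signed_perms n"
      using less.prems gen_signed_perms k comp_signed_perms by blast
    have count: "inversions n ?\<rho> + negatives n ?\<rho> = inversions n \<pi> + negatives n \<pi> - 2"
      using length_count_comp_gen[OF k(1) less.prems] k by simp
    then obtain ks where "set ks \<subseteq> {0..<n}" "gen_word ks = ?\<rho>"
      "2 * int (length ks) = inversions n ?\<rho> + negatives n ?\<rho>"
      using less.hyps[OF _ \<rho>] length_count_nonneg[of n ?\<rho>] by fastforce
    then show ?thesis
      using k count by (intro exI[of _ "ks @ [k]"]) (auto simp: gen_word_snoc)
  qed
qed

lemma clen_eq_length_count: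
  assumes "\<pi> \<in> signed_perms n"
  shows "2 * int (clen n \<pi>) = inversions n \<pi> + negatives n \<pi>"
proof -
  obtain ks where ks: "set ks \<subseteq> {0..<n}" "gen_word ks = \<pi>"
    "2 * int (length ks) = inversions n \<pi> + negatives n \<pi>"
    using exists_gen_word[OF assms] by blast
  have "clen n \<pi> = length ks"
    unfolding clen_def
  proof (rule Least_equality)
    show "\<exists>ks'. length ks' = length ks \<and> set ks' \<subseteq> {0..<n} \<and> \<pi> = foldr (\<lambda>k f. gen k \<circ> f) ks' id"
      using ks by (auto simp: gen_word_def)
  next
    fix m
    assume "\<exists>ks'. length ks' = m \<and> set ks' \<subseteq> {0..<n} \<and> \<pi> = foldr (\<lambda>k f. gen k \<circ> f) ks' id"
    then show "length ks \<le> m"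
      using length_count_gen_word ks unfolding gen_word_def by fastforce
  qed
  with ks show ?thesis by simp
qed

lemma clen_comp_gen_less_iff:
  assumes \<pi>: "\<pi> \<in> signed_perms n" and k: "k < n"
  shows "clen n (\<pi> \<circ> gen k) < clen n \<pi> \<longleftrightarrow> \<pi> (gen_hi k) < \<pi> (gen_lo k)"
  using clen_eq_length_count[OF \<pi>] clen_eq_length_count[OF comp_signed_perms[OF \<pi> gen_signed_perms[OF k]]]
    length_count_comp_gen[OF k \<pi>] signed_perm_lo_ne_hi[OF \<pi> k]
  by (auto split: if_splits)

section \<open>Right multiplication by \<open>R\<^sub>k(p)\<close>\<close>

text \<open>Weight of a vertex entered by colour \<open>l\<close> from the left and \<open>b\<close> from below and left by
  \<open>r\<close> to the right and \<open>u\<close> upwards.\<close>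
definition cross_weight :: "'a::field \<Rightarrow> 'a \<Rightarrow> int \<Rightarrow> int \<Rightarrow> int \<Rightarrow> int \<Rightarrow> 'a" where
  "cross_weight p qk l b r u =
     (if l = b then 0
      else if b < l then (if r = l \<and> u = b then p else if r = b \<and> u = l then 1 - p else 0)
      else (if r = l \<and> u = b then qk * p else if r = b \<and> u = l then 1 - qk * p else 0))"

lemma cross_weight_nonzero:
  "cross_weight p qk l b r u \<noteq> 0 \<Longrightarrow> (r = l \<and> u = b) \<or> (r = b \<and> u = l)"
  by (auto simp: cross_weight_def split: if_splits)

lemma vweight_eq_cross_weight:
  "vweight q t \<nu> z c (x, y)
     = cross_weight (pxy q t \<nu> z x y) (qpar q t (nat (y - x)))
         (c (HE x y)) (c (VE x y)) (c (HE (x + 1) y)) (c (VE x (y + 1)))"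
  by (simp add: vweight_def cross_weight_def Let_def)

lemma vweight_cong:
  "(\<And>e. e \<in> {HE x y, VE x y, HE (x + 1) y, VE x (y + 1)} \<Longrightarrow> c e = c' e)
   \<Longrightarrow> vweight q t \<nu> z c (x, y) = vweight q t \<nu> z c' (x, y)"
  by (simp add: vweight_def)

text \<open>The coefficient of \<open>T\<^sub>\<pi>\<close> in \<open>T\<^sub>\<pi>\<^sub>' R\<^sub>k(p)\<close>: a vertex whose incoming edges carry the labels
  \<open>gen_hi k\<close> (left) and \<open>gen_lo k\<close> (below) turns the exit data \<open>\<pi>'\<close> into \<open>\<pi>\<close>.\<close>
definition hecke_weight :: "nat \<Rightarrow> 'a::field \<Rightarrow> 'a \<Rightarrow> (int \<Rightarrow> int) \<Rightarrow> (int \<Rightarrow> int) \<Rightarrow> 'a" where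
  "hecke_weight k p qk \<pi>' \<pi> =
     (if \<forall>j. j \<notin> {gen_lo k, gen_hi k, - gen_lo k, - gen_hi k} \<longrightarrow> \<pi>' j = \<pi> j
      then cross_weight p qk (\<pi>' (gen_hi k)) (\<pi>' (gen_lo k)) (\<pi> (gen_lo k)) (\<pi> (gen_hi k))
      else 0)"

lemma hecke_weight_nonzero:
  assumes \<pi>: "\<pi> \<in> signed_perms n" and \<pi>': "\<pi>' \<in> signed_perms n"
    and "hecke_weight k p qk \<pi>' \<pi> \<noteq> 0"
  shows "\<pi>' = \<pi> \<or> \<pi>' = \<pi> \<circ> gen k"
proof -
  have agree: "\<And>j. j \<notin> {gen_lo k, gen_hi k, - gen_lo k, - gen_hi k} \<Longrightarrow> \<pi>' j = \<pi> j"
    and "cross_weight p qk (\<pi>' (gen_hi k)) (\<pi>' (gen_lo k)) (\<pi> (gen_lo k)) (\<pi> (gen_hi k)) \<noteq> 0"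
    using assms(3) unfolding hecke_weight_def by (auto split: if_splits)
  from cross_weight_nonzero[OF this(2)] show ?thesis
  proof
    assume "\<pi> (gen_lo k) = \<pi>' (gen_hi k) \<and> \<pi> (gen_hi k) = \<pi>' (gen_lo k)"
    then have "\<pi>' = \<pi> \<circ> gen k"
      by (intro odd_fun_eqI[of _ _ "gen_lo k" "gen_hi k"])
        (use agree gen_fixes signed_permsD(2)[OF \<pi>] signed_permsD(2)[OF \<pi>'] gen_uminus in auto)
    then show ?thesis ..
  next
    assume "\<pi> (gen_lo k) = \<pi>' (gen_lo k) \<and> \<pi> (gen_hi k) = \<pi>' (gen_hi k)"
    then have "\<pi>' = \<pi>"
      by (intro odd_fun_eqI[of _ _ "gen_lo k" "gen_hi k"])
        (use agree signed_permsD(2)[OF \<pi>] signed_permsD(2)[OF \<pi>'] in auto)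
    then show ?thesis ..
  qed
qed

lemma rmulR_Tb_eq_hecke_weight:
  assumes \<pi>: "\<pi> \<in> signed_perms n" and \<pi>': "\<pi>' \<in> signed_perms n" and k: "k < n"
  shows "rmulR n q t k p (Tb \<pi>') \<pi> = hecke_weight k p (qpar q t k) \<pi>' \<pi>"
proof -
  have ne: "\<pi> (gen_lo k) \<noteq> \<pi> (gen_hi k)"
    using signed_perm_lo_ne_hi[OF \<pi> k] .
  then have ng: "\<pi> \<circ> gen k \<noteq> \<pi>"
    by (metis comp_apply gen_gen_lo)
  have rmul: "rmulR n q t k p (Tb \<pi>') \<pi>
      = p * (if \<pi> (gen_hi k) < \<pi> (gen_lo k) then Tb \<pi>' (\<pi> \<circ> gen k) + (1 - qpar q t k) * Tb \<pi>' \<pi>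
             else qpar q t k * Tb \<pi>' (\<pi> \<circ> gen k))
        + (1 - p) * Tb \<pi>' \<pi>"
    using clen_comp_gen_less_iff[OF \<pi> k] by (simp add: rmulR_def rmulT_def)
  consider "\<pi>' = \<pi>" | "\<pi>' = \<pi> \<circ> gen k"
    | "\<pi>' \<noteq> \<pi>" "\<pi>' \<noteq> \<pi> \<circ> gen k" "hecke_weight k p (qpar q t k) \<pi>' \<pi> = 0"
    using hecke_weight_nonzero[OF \<pi> \<pi>'] by blast
  then show ?thesis
  proof cases
    case 1
    then show ?thesis
      unfolding rmul using ne ng by (auto simp: hecke_weight_def cross_weight_def Tb_def algebra_simps)
  next
    case 2
    then have "\<forall>j. j \<notin> {gen_lo k, gen_hi k, - gen_lo k, - gen_hi k} \<longrightarrow> \<pi>' j = \<pi> j"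
      using gen_fixes by simp
    then show ?thesis
      unfolding rmul using 2 ne ng by (auto simp: hecke_weight_def cross_weight_def Tb_def)
  next
    case 3
    then show ?thesis unfolding rmul by (auto simp: Tb_def)
  qed
qed

lemma sum_Tb_apply:
  "finite S \<Longrightarrow> (\<Sum>\<pi>\<in>S. f \<pi> * Tb \<pi> w) = (if w \<in> S then f w else (0::'a::field))"
  by (simp add: Tb_def if_distrib sum.delta' cong: if_cong)

lemma rmulR_sum_Tb:
  "rmulR n q t k p (\<lambda>v. \<Sum>\<pi>\<in>S. c \<pi> * Tb \<pi> v) w = (\<Sum>\<pi>\<in>S. c \<pi> * rmulR n q t k p (Tb \<pi>) w)"
proof -
  define d where "d = (clen n (w \<circ> gen k) < clen n w)"
  have lin: "\<And>h. rmulR n q t k p h w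
      = (if d then p else p * qpar q t k) * h (w \<circ> gen k)
        + ((if d then p * (1 - qpar q t k) else 0) + (1 - p)) * h w"
    by (simp add: rmulR_def rmulT_def d_def algebra_simps)
  have "(\<Sum>\<pi>\<in>S. c \<pi> * (\<alpha> * A \<pi> + \<beta> * B \<pi>)) = \<alpha> * (\<Sum>\<pi>\<in>S. c \<pi> * A \<pi>) + \<beta> * (\<Sum>\<pi>\<in>S. c \<pi> * B \<pi>)"
    for \<alpha> \<beta> :: 'a and A B :: "(int \<Rightarrow> int) \<Rightarrow> 'a"
    by (simp add: sum.distrib sum_distrib_left ring_distribs mult.left_commute)
  then show ?thesis
    unfolding lin by simp
qed

lemma rmulR_Tb_outside:
  assumes w: "w \<notin> signed_perms n" and \<pi>: "\<pi> \<in> signed_perms n" and k: "k < n"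
  shows "rmulR n q t k p (Tb \<pi>) w = 0"
proof -
  have "w \<circ> gen k \<notin> signed_perms n"
    using w comp_signed_perms[OF _ gen_signed_perms[OF k], of "w \<circ> gen k"] by auto
  then show ?thesis
    using w \<pi> by (auto simp: rmulR_def rmulT_def Tb_def)
qed

lemma mulY_snoc:
  "mulY n q t \<nu> z (L @ [(x, y)]) h = rmulR n q t (nat (y - x)) (pxy q t \<nu> z x y) (mulY n q t \<nu> z L h)"
  by (simp add: mulY_def)

section \<open>Symmetric lattice paths and skew domains\<close>

lemma cntL_0 [simp]: "cntL R 0 = 0"
  by (simp add: cntL_def)

lemma cntL_Suc: "i < length R \<Longrightarrow> cntL R (Suc i) = cntL R i + (if R ! i then 0 else 1)"
  by (simp add: cntL_def take_Suc_conv_app_nth)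

lemma cntL_bounds: "0 \<le> cntL R i \<and> cntL R i \<le> int i"
  unfolding cntL_def by (simp add: le_trans[OF length_filter_le])

lemma cntU_eq: "i \<le> length R \<Longrightarrow> cntU R i = int i - cntL R i"
proof (induction i)
  case (Suc i)
  then show ?case
    using cntL_Suc[of i R] by (simp add: cntU_def take_Suc_conv_app_nth)
qed (simp add: cntU_def)

lemma dual_a_Suc: "m < length R \<Longrightarrow> dual_a a0 R (Suc m) = dual_a a0 R m - (if R ! m then 0 else 1)"
  using cntL_Suc[of m R] by (simp add: dual_a_def)

lemma dual_a_Suc_bounds:
  "m < length R \<Longrightarrow> dual_a a0 R m - 1 \<le> dual_a a0 R (Suc m) \<and> dual_a a0 R (Suc m) \<le> dual_a a0 R m"
  using dual_a_Suc[of m R a0] by simp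

lemma step_edge_eq:
  "i < length R \<Longrightarrow> step_edge a0 n R i =
     (if R ! i then HE (dual_a a0 R i + 1) (dual_a a0 R i + int i - int n + 1)
      else VE (dual_a a0 R i) (dual_a a0 R i + int i - int n + 1))"
  using cntU_eq[of i R] by (simp add: step_edge_def dual_a_def dual_b_def)

lemma step_edge_HE_D:
  "i < length R \<Longrightarrow> step_edge a0 n R i = HE a b \<Longrightarrow>
     R ! i \<and> dual_a a0 R i = a - 1 \<and> int i = b - a + int n"
  by (simp add: step_edge_eq split: if_splits)

lemma step_edge_VE_D:
  "i < length R \<Longrightarrow> step_edge a0 n R i = VE a b \<Longrightarrow>
     \<not> R ! i \<and> dual_a a0 R i = a \<and> int i = b - a + int n - 1"
  by (simp add: step_edge_eq split: if_splits)

lemma step_edge_inj: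
  "i < length R \<Longrightarrow> j < length R \<Longrightarrow> step_edge a0 n R i = step_edge a0 n R j \<Longrightarrow> i = j"
  by (auto simp: step_edge_eq split: if_splits)

lemma sym_path_length: "sym_path n R \<Longrightarrow> length R = 2 * n"
  by (simp add: sym_path_def)

lemma sym_path_nth: "sym_path n R \<Longrightarrow> i < 2 * n \<Longrightarrow> R ! (2 * n - 1 - i) = (\<not> R ! i)"
  unfolding sym_path_def by blast

lemma sym_path_cntL:
  assumes R: "sym_path n R" and i: "i \<le> 2 * n"
  shows "cntL R (2 * n - i) = int n - int i + cntL R i"
proof -
  have len: "length R = 2 * n"
    using R by (rule sym_path_length)
  define g where "g m = cntL R (2 * n - m) - cntL R m + int m" for m
  have step: "g (Suc m) = g m" if "m < 2 * n" for m
  proof -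
    have "2 * n - m = Suc (2 * n - Suc m)"
      using that by simp
    then have "cntL R (2 * n - m) = cntL R (2 * n - Suc m) + (if R ! (2 * n - Suc m) then 0 else 1)"
      using cntL_Suc[of "2 * n - Suc m" R] that len by simp
    then show ?thesis
      using cntL_Suc[of m R] sym_path_nth[OF R that] that len by (simp add: g_def)
  qed
  have all: "g m = g 0" if "m \<le> 2 * n" for m
    using that by (induction m) (use step in auto)
  have "g i = g n"
    using all[OF i] all[of n] by simp
  then show ?thesis by (simp add: g_def)
qed

lemma sym_path_cntL_length: "sym_path n R \<Longrightarrow> cntL R (2 * n) = int n"
  using sym_path_cntL[of n R 0] by simp

lemma sym_path_dual_a:
  "sym_path n R \<Longrightarrow> m \<le> 2 * n \<Longrightarrow> dual_a a0 R (2 * n - m) = dual_a a0 R m + int m - int n"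
  using sym_path_cntL[of n R m] by (simp add: dual_a_def)

lemma mir_step_edge:
  assumes R: "sym_path n R" and i: "i < 2 * n"
  shows "mir (step_edge a0 n R i) = step_edge a0 n R (2 * n - 1 - i)"
proof -
  have len: "length R = 2 * n"
    using R by (rule sym_path_length)
  have "cntL R (2 * n - Suc i) = int n - int (Suc i) + cntL R i + (if R ! i then 0 else 1)"
    using sym_path_cntL[OF R, of "Suc i"] cntL_Suc[of i R] len i by simp
  moreover have "R ! (2 * n - Suc i) = (\<not> R ! i)"
    using sym_path_nth[OF R i] by simp
  moreover have "int (2 * n - Suc i) = 2 * int n - 1 - int i"
    using i by simp
  ultimately show ?thesis
    using step_edge_eq[of "2 * n - Suc i" R] step_edge_eq[of i R] len i
    by (cases "R ! i") (simp_all add: dual_a_def)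
qed

lemma label_idx_less: "j \<in> pm_set n \<Longrightarrow> label_idx n j < 2 * n"
  by (auto simp: label_idx_def pm_set_iff)

lemma label_idx_uminus: "j \<in> pm_set n \<Longrightarrow> label_idx n (- j) = 2 * n - 1 - label_idx n j"
  by (auto simp: label_idx_def pm_set_iff nat_diff_distrib)

lemma label_idx_inj:
  "j1 \<in> pm_set n \<Longrightarrow> j2 \<in> pm_set n \<Longrightarrow> label_idx n j1 = label_idx n j2 \<Longrightarrow> j1 = j2"
  by (auto simp: label_idx_def pm_set_iff split: if_splits)

lemma mir_path_edge:
  "sym_path n R \<Longrightarrow> j \<in> pm_set n \<Longrightarrow> mir (path_edge a0 n R j) = path_edge a0 n R (- j)"
  unfolding path_edge_def using mir_step_edge label_idx_less label_idx_uminus by simp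

lemma path_edge_inj:
  assumes "sym_path n R" "j1 \<in> pm_set n" "j2 \<in> pm_set n" "path_edge a0 n R j1 = path_edge a0 n R j2"
  shows "j1 = j2"
proof -
  have "label_idx n j1 = label_idx n j2"
    using assms step_edge_inj[of "label_idx n j1" R "label_idx n j2"] label_idx_less sym_path_length
    unfolding path_edge_def by simp
  then show ?thesis
    using label_idx_inj assms by blast
qed

definition path_label :: "int \<Rightarrow> nat \<Rightarrow> bool list \<Rightarrow> edge \<Rightarrow> int" where
  "path_label a0 n R e = (THE j. j \<in> pm_set n \<and> path_edge a0 n R j = e)"

lemma path_label_path_edge:
  "sym_path n R \<Longrightarrow> j \<in> pm_set n \<Longrightarrow> path_label a0 n R (path_edge a0 n R j) = j"
  unfolding path_label_def by (rule the_equality) (use path_edge_inj in auto)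

lemma skew_dom_iff:
  "(x, y) \<in> skew_dom a0 n P Q \<longleftrightarrow>
     - int n \<le> y - x \<and> y - x \<le> int n
     \<and> dual_a a0 P (nat (y - x + int n)) < x \<and> x \<le> dual_a a0 Q (nat (y - x + int n))"
proof
  assume "(x, y) \<in> skew_dom a0 n P Q"
  then obtain i where "i \<le> 2 * n" "y - x = int i - int n" "dual_a a0 P i < x" "x \<le> dual_a a0 Q i"
    by (auto simp: skew_dom_def)
  moreover from this have "nat (y - x + int n) = i"
    by simp
  ultimately show "- int n \<le> y - x \<and> y - x \<le> int n
     \<and> dual_a a0 P (nat (y - x + int n)) < x \<and> x \<le> dual_a a0 Q (nat (y - x + int n))"
    by simp
next
  assume "- int n \<le> y - x \<and> y - x \<le> int n
     \<and> dual_a a0 P (nat (y - x + int n)) < x \<and> x \<le> dual_a a0 Q (nat (y - x + int n))"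
  then show "(x, y) \<in> skew_dom a0 n P Q"
    unfolding skew_dom_def by (intro CollectI, unfold case_prod_conv, intro exI[of _ "nat (y - x + int n)"]) auto
qed

lemma skew_dom_sym:
  assumes PQ: "skew_domain n P Q" and xy: "(x, y) \<in> skew_dom a0 n P Q"
  shows "(y, x) \<in> skew_dom a0 n P Q"
proof -
  define m where "m = nat (y - x + int n)"
  have h: "- int n \<le> y - x" "y - x \<le> int n" "dual_a a0 P m < x" "x \<le> dual_a a0 Q m"
    using xy unfolding skew_dom_iff m_def by auto
  then have m: "m \<le> 2 * n" "int m = y - x + int n"
    by (auto simp: m_def)
  then have "nat (x - y + int n) = 2 * n - m"
    by simp
  then show ?thesis
    unfolding skew_dom_iff
    using h m PQ sym_path_dual_a[of n P m a0] sym_path_dual_a[of n Q m a0]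
    by (simp add: skew_domain_def)
qed

lemma finite_skew_dom: "finite (skew_dom a0 n P Q)"
proof (rule finite_subset)
  show "skew_dom a0 n P Q \<subseteq> {a0 - 2 * int n .. a0} \<times> {a0 - 3 * int n .. a0 + int n}"
  proof
    fix v
    assume "v \<in> skew_dom a0 n P Q"
    then obtain x y i where "v = (x, y)" "i \<le> 2 * n" "y - x = int i - int n"
      "dual_a a0 P i < x" "x \<le> dual_a a0 Q i"
      by (auto simp: skew_dom_def)
    then show "v \<in> {a0 - 2 * int n .. a0} \<times> {a0 - 3 * int n .. a0 + int n}"
      using cntL_bounds[of P i] cntL_bounds[of Q i] by (auto simp: dual_a_def)
  qed
qed simp

lemma finite_domp: "finite (domp a0 n P Q)"
  using finite_skew_dom[of a0 n P Q] by (rule finite_subset[rotated]) (auto simp: domp_def)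

lemma finite_dom_edges: "finite (dom_edges a0 n P Q)"
proof -
  have "{HE x y | x y. (x - 1, y) \<in> skew_dom a0 n P Q \<and> (x, y) \<in> skew_dom a0 n P Q}
      \<subseteq> (\<lambda>(x, y). HE x y) ` skew_dom a0 n P Q"
    and "{VE x y | x y. (x, y - 1) \<in> skew_dom a0 n P Q \<and> (x, y) \<in> skew_dom a0 n P Q}
      \<subseteq> (\<lambda>(x, y). VE x y) ` skew_dom a0 n P Q"
    by auto
  then show ?thesis
    unfolding dom_edges_def using finite_skew_dom by (auto intro: finite_subset)
qed

lemma path_edge_in_dom_edges:
  "j \<in> pm_set n \<Longrightarrow> path_edge a0 n P j \<in> dom_edges a0 n P Q"
  "j \<in> pm_set n \<Longrightarrow> path_edge a0 n Q j \<in> dom_edges a0 n P Q"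
  unfolding dom_edges_def by blast+

lemma mir_in_dom_edges:
  assumes PQ: "skew_domain n P Q" and e: "e \<in> dom_edges a0 n P Q"
  shows "mir e \<in> dom_edges a0 n P Q"
proof -
  have P: "sym_path n P" and Q: "sym_path n Q"
    using PQ by (auto simp: skew_domain_def)
  show ?thesis
    using e[unfolded dom_edges_def]
  proof (elim UnE)
    assume "e \<in> path_edge a0 n P ` pm_set n"
    then show ?thesis
      using mir_path_edge[OF P] uminus_in_pm_set by (auto simp: dom_edges_def)
  next
    assume "e \<in> path_edge a0 n Q ` pm_set n"
    then show ?thesis
      using mir_path_edge[OF Q] uminus_in_pm_set by (auto simp: dom_edges_def)
  qed (use skew_dom_sym[OF PQ] in \<open>fastforce simp: dom_edges_def\<close>)+
qed

definition colorings :: "int \<Rightarrow> nat \<Rightarrow> bool list \<Rightarrow> bool list \<Rightarrow> (int \<Rightarrow> int) \<Rightarrow> (int \<Rightarrow> int)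
                         \<Rightarrow> (edge \<Rightarrow> int) set" where
  "colorings a0 n P Q \<sigma> \<pi> =
     {c \<in> Pi\<^sub>E (dom_edges a0 n P Q) (\<lambda>_. pm_set n).
        (\<forall>e \<in> dom_edges a0 n P Q. c (mir e) = - c e)
      \<and> (\<forall>j \<in> pm_set n. c (path_edge a0 n P j) = \<sigma> j \<and> c (path_edge a0 n Q j) = \<pi> j)}"

lemma Pprob_eq_sum_colorings:
  "Pprob q t \<nu> z a0 n P Q \<sigma> \<pi> = (\<Sum>c\<in>colorings a0 n P Q \<sigma> \<pi>. \<Prod>v\<in>domp a0 n P Q. vweight q t \<nu> z c v)"
  by (simp add: Pprob_def colorings_def)

lemma finite_colorings: "finite (colorings a0 n P Q \<sigma> \<pi>)"
proof -
  have "finite (Pi\<^sub>E (dom_edges a0 n P Q) (\<lambda>_. pm_set n))"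
    by (intro finite_PiE finite_dom_edges) simp
  then show ?thesis
    unfolding colorings_def by simp
qed

section \<open>Removing a corner\<close>

text \<open>\<open>(x, y)\<close> is a maximal vertex of \<open>A\<^sup>+\<close>: its right and upper neighbours lie outside \<open>A\<close>. Then \<open>Q\<close>
  makes an up step followed by a left step around \<open>(x, y)\<close> (steps \<open>i\<close>, \<open>i + 1\<close>, crossed by the edges
  labelled \<open>gen_lo k\<close>, \<open>gen_hi k\<close>), and swapping these two steps and their mirror images gives a path
  \<open>Q'\<close> bounding \<open>A - {(x, y), (y, x)}\<close>.\<close>
locale corner =
  fixes a0 :: int and n :: nat and P Q :: "bool list" and x y :: int
  assumes PQ: "skew_domain n P Q"
    and corner_in: "(x, y) \<in> skew_dom a0 n P Q"
    and x_le_y: "x \<le> y"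
    and right_out: "(x + 1, y) \<notin> skew_dom a0 n P Q"
    and up_out: "(x, y + 1) \<notin> skew_dom a0 n P Q"
begin

definition k where "k = nat (y - x)"
definition i where "i = n + k - 1"
abbreviation aP where "aP \<equiv> dual_a a0 P"
abbreviation aQ where "aQ \<equiv> dual_a a0 Q"

lemma sym_P: "sym_path n P" and sym_Q: "sym_path n Q"
  using PQ by (auto simp: skew_domain_def)

lemma length_P: "length P = 2 * n" and length_Q: "length Q = 2 * n"
  using sym_P sym_Q sym_path_length by auto

lemma y_eq: "y = x + int k"
  using x_le_y by (simp add: k_def)

lemma corner_strip: "int k \<le> int n \<and> aP (n + k) < x \<and> x \<le> aQ (n + k)"
proof -
  have "nat (y - x + int n) = n + k"
    using x_le_y by (simp add: k_def nat_add_distrib)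
  then show ?thesis
    using corner_in unfolding skew_dom_iff using y_eq by simp
qed

lemma k_less: "k < n"
proof (rule ccontr)
  assume "\<not> k < n"
  then have "k = n"
    using corner_strip by simp
  then have "aP (2 * n) < aQ (2 * n)"
    using corner_strip by (simp add: mult_2)
  then show False
    using sym_path_cntL_length[OF sym_P] sym_path_cntL_length[OF sym_Q] by (simp add: dual_a_def)
qed

lemma i_props: "Suc i = n + k" "Suc (Suc i) \<le> 2 * n" "int i = int n + int k - 1" "i < 2 * n"
  using k_less by (auto simp: i_def)

lemma dual_a_P_corner: "aP (Suc i) < x"
  and dual_a_Q_corner: "x \<le> aQ (Suc i)"
  using corner_strip unfolding i_props(1)[symmetric] by simp_all

lemma Q_corner: "Q ! i" "\<not> Q ! Suc i" "aQ i = x" "aQ (Suc i) = x" "aQ (Suc (Suc i)) = x - 1"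
proof -
  have si: "Suc i < 2 * n"
    using i_props(2) by simp
  have "nat (y - (x + 1) + int n) = i" "- int n \<le> y - (x + 1)" "y - (x + 1) \<le> int n"
    using i_props y_eq k_less by auto
  then have "\<not> (aP i < x + 1 \<and> x + 1 \<le> aQ i)"
    using right_out unfolding skew_dom_iff by simp
  then have "aQ i \<le> x"
    using dual_a_Suc_bounds[of i P a0] i_props(4) length_P dual_a_P_corner by simp
  then show qi: "aQ i = x" "aQ (Suc i) = x"
    using dual_a_Suc_bounds[of i Q a0] i_props(4) length_Q dual_a_Q_corner by auto
  then show "Q ! i"
    using dual_a_Suc[of i Q a0] length_Q i_props by (auto split: if_splits)
  have "nat (y + 1 - x + int n) = Suc (Suc i)" "- int n \<le> y + 1 - x" "y + 1 - x \<le> int n"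
    using i_props y_eq k_less by auto
  then have "\<not> (aP (Suc (Suc i)) < x \<and> x \<le> aQ (Suc (Suc i)))"
    using up_out unfolding skew_dom_iff by simp
  then have "aQ (Suc (Suc i)) < x"
    using dual_a_Suc_bounds[of "Suc i" P a0] si length_P dual_a_P_corner by simp
  then show "aQ (Suc (Suc i)) = x - 1"
    using dual_a_Suc_bounds[of "Suc i" Q a0] si length_Q qi by simp
  then show "\<not> Q ! Suc i"
    using dual_a_Suc[of "Suc i" Q a0] length_Q si qi by (auto split: if_splits)
qed

lemma Q_mirror_corner: "Q ! (2 * n - 2 - i)" "\<not> Q ! (2 * n - 1 - i)"
  using sym_path_nth[OF sym_Q, of "Suc i"] sym_path_nth[OF sym_Q, of i] i_props(2,4) Q_corner(1,2)
  by (simp_all add: numeral_2_eq_2)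

lemma dual_a_Q_mirror: "aQ (2 * n - 1 - i) = y"
  using sym_path_dual_a[OF sym_Q, of "Suc i" a0] i_props(2,3) Q_corner y_eq by simp

lemma corner_indices_distinct:
  "Suc i \<noteq> 2 * n - 2 - i" "i \<noteq> 2 * n - 1 - i" "i \<noteq> 2 * n - Suc i" "Suc i \<noteq> 2 * n - Suc (Suc i)"
  using i_props(2,4) by presburger+

definition Q'_bit where
  "Q'_bit r = (if r = i \<or> r = 2 * n - 2 - i then False
               else if r = Suc i \<or> r = 2 * n - 1 - i then True else Q ! r)"

definition Q' where "Q' = map Q'_bit [0..<2 * n]"

definition Q'_shift where "Q'_shift m = (if m = Suc i \<or> m = 2 * n - 1 - i then 1 else (0::int))"

lemma length_Q': "length Q' = 2 * n"
  by (simp add: Q'_def)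

lemma nth_Q': "r < 2 * n \<Longrightarrow> Q' ! r = Q'_bit r"
  by (simp add: Q'_def)

lemma Q'_shift_step:
  assumes m: "m < 2 * n"
  shows "Q'_shift m + (if Q'_bit m then 0 else 1) = (if Q ! m then 0 else 1) + Q'_shift (Suc m)"
proof (cases "k = 0")
  case True
  then have "2 * n - 2 - i = i" "2 * n - 1 - i = Suc i"
    using i_props by auto
  then show ?thesis
    using Q_corner Q_mirror_corner unfolding Q'_shift_def Q'_bit_def by auto
next
  case False
  then have "2 * n - 1 - i < i" "Suc (2 * n - 2 - i) = 2 * n - 1 - i"
    "Suc m = 2 * n - 1 - i \<longleftrightarrow> m = 2 * n - 2 - i"
    using i_props by auto
  then show ?thesis
    using Q_corner Q_mirror_corner unfolding Q'_shift_def Q'_bit_def by auto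
qed

lemma cntL_Q': "m \<le> 2 * n \<Longrightarrow> cntL Q' m = cntL Q m + Q'_shift m"
proof (induction m)
  case 0
  then show ?case
    using i_props by (simp add: Q'_shift_def)
next
  case (Suc m)
  then show ?case
    using cntL_Suc[of m Q'] cntL_Suc[of m Q] length_Q' length_Q nth_Q' Q'_shift_step[of m] by simp
qed

lemma dual_a_Q': "m \<le> 2 * n \<Longrightarrow> dual_a a0 Q' m = aQ m - Q'_shift m"
  using cntL_Q' by (simp add: dual_a_def)

lemma sym_Q': "sym_path n Q'"
  unfolding sym_path_def
proof (intro conjI allI impI)
  show "length Q' = 2 * n"
    by (rule length_Q')
  fix r
  assume r: "r < 2 * n"
  define r' where "r' = 2 * n - 1 - r"
  define F where "F = {i, 2 * n - 2 - i}"
  define T where "T = {Suc i, 2 * n - 1 - i}"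
  have "r' < 2 * n"
    using r by (simp add: r'_def)
  moreover have "Q ! r' = (\<not> Q ! r)"
    using sym_path_nth[OF sym_Q r] by (simp add: r'_def)
  moreover have "r' \<in> F \<longleftrightarrow> r \<in> T" "r' \<in> T \<longleftrightarrow> r \<in> F"
    using r i_props(2) unfolding r'_def F_def T_def by auto
  moreover have "F \<inter> T = {}"
    using corner_indices_distinct i_props(2) by (auto simp: F_def T_def)
  moreover have "Q'_bit m = (if m \<in> F then False else if m \<in> T then True else Q ! m)" for m
    by (simp add: Q'_bit_def F_def T_def)
  ultimately have "Q' ! r = (\<not> Q' ! r')"
    using r by (auto simp: nth_Q')
  then show "Q' ! r = (\<not> Q' ! (2 * n - 1 - r))"
    by (simp add: r'_def)
qed

lemma skew_domain_Q': "skew_domain n P Q'"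
  unfolding skew_domain_def
proof (intro conjI allI impI sym_P sym_Q')
  fix m
  assume m: "m \<le> 2 * n"
  have "cntL Q (Suc i) + 1 \<le> cntL P (Suc i)"
    using dual_a_P_corner Q_corner by (simp add: dual_a_def)
  moreover from this have "cntL Q (2 * n - Suc i) + 1 \<le> cntL P (2 * n - Suc i)"
    using sym_path_cntL[OF sym_P, of "Suc i"] sym_path_cntL[OF sym_Q, of "Suc i"] i_props(2) by simp
  moreover have "cntL Q m \<le> cntL P m"
    using PQ m by (simp add: skew_domain_def)
  ultimately show "cntL Q' m \<le> cntL P m"
    using cntL_Q'[OF m] unfolding Q'_shift_def by (auto split: if_splits)
qed

lemma skew_dom_Q'_iff:
  "(x', y') \<in> skew_dom a0 n P Q' \<longleftrightarrow>
     (x', y') \<in> skew_dom a0 n P Q \<and> (x', y') \<noteq> (x, y) \<and> (x', y') \<noteq> (y, x)"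
proof (cases "- int n \<le> y' - x' \<and> y' - x' \<le> int n")
  case True
  define m where "m = nat (y' - x' + int n)"
  have m: "m \<le> 2 * n" "int m = y' - x' + int n"
    using True by (auto simp: m_def)
  have "2 * n - 1 - i = n - k"
    using i_props k_less by linarith
  then have m_eq: "m = Suc i \<longleftrightarrow> y' = x' + int k" "m = 2 * n - 1 - i \<longleftrightarrow> x' = y' + int k"
    using i_props(3) m k_less by linarith+
  have corner: "(x', y') = (x, y) \<longleftrightarrow> m = Suc i \<and> x' = aQ m"
    using m_eq(1) Q_corner y_eq by auto
  have mirror: "(x', y') = (y, x) \<longleftrightarrow> m = 2 * n - 1 - i \<and> x' = aQ m"
    using m_eq(2) dual_a_Q_mirror y_eq by auto
  have "(x', y') \<in> skew_dom a0 n P Q' \<longleftrightarrow> aP m < x' \<and> x' \<le> aQ m - Q'_shift m"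
    using True dual_a_Q'[OF m(1)] unfolding skew_dom_iff m_def[symmetric] by simp
  moreover have "(x', y') \<in> skew_dom a0 n P Q \<longleftrightarrow> aP m < x' \<and> x' \<le> aQ m"
    using True unfolding skew_dom_iff m_def[symmetric] by simp
  ultimately show ?thesis
    unfolding corner mirror Q'_shift_def by auto
qed (auto simp: skew_dom_iff)

lemma skew_dom_Q'_subset: "skew_dom a0 n P Q' \<subseteq> skew_dom a0 n P Q"
  using skew_dom_Q'_iff by auto

lemma corner_notin_Q': "(x, y) \<notin> skew_dom a0 n P Q'" "(y, x) \<notin> skew_dom a0 n P Q'"
  using skew_dom_Q'_iff by auto

lemma domp_Q': "domp a0 n P Q' = domp a0 n P Q - {(x, y)}"
  unfolding domp_def using skew_dom_Q'_iff x_le_y by auto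

lemma corner_in_domp: "(x, y) \<in> domp a0 n P Q"
  using corner_in x_le_y by (simp add: domp_def)

lemma corner_labels_in_pm_set:
  "gen_lo k \<in> pm_set n" "gen_hi k \<in> pm_set n" "- gen_lo k \<in> pm_set n" "- gen_hi k \<in> pm_set n"
  using k_less by (auto simp: gen_lo_def gen_hi_def pm_set_iff)

lemma label_idx_corner:
  "label_idx n (gen_lo k) = i" "label_idx n (gen_hi k) = Suc i"
  "label_idx n (- gen_lo k) = 2 * n - 1 - i" "label_idx n (- gen_hi k) = 2 * n - 2 - i"
proof -
  show lo: "label_idx n (gen_lo k) = i" and hi: "label_idx n (gen_hi k) = Suc i"
    using i_props k_less by (auto simp: label_idx_def gen_lo_def gen_hi_def)
  show "label_idx n (- gen_lo k) = 2 * n - 1 - i" "label_idx n (- gen_hi k) = 2 * n - 2 - i"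
    using label_idx_uminus[OF corner_labels_in_pm_set(1)] label_idx_uminus[OF corner_labels_in_pm_set(2)] lo hi
    by simp_all
qed

lemma path_edge_Q_corner:
  "path_edge a0 n Q (gen_lo k) = HE (x + 1) y" "path_edge a0 n Q (gen_hi k) = VE x (y + 1)"
  "path_edge a0 n Q (- gen_lo k) = VE y (x + 1)" "path_edge a0 n Q (- gen_hi k) = HE (y + 1) x"
proof -
  show lo: "path_edge a0 n Q (gen_lo k) = HE (x + 1) y"
    unfolding path_edge_def label_idx_corner
    using step_edge_eq[of i Q a0 n] length_Q i_props(3,4) Q_corner y_eq by simp
  show hi: "path_edge a0 n Q (gen_hi k) = VE x (y + 1)"
    unfolding path_edge_def label_idx_corner
    using step_edge_eq[of "Suc i" Q a0 n] length_Q i_props(2,3) Q_corner y_eq by simp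
  show "path_edge a0 n Q (- gen_lo k) = VE y (x + 1)" "path_edge a0 n Q (- gen_hi k) = HE (y + 1) x"
    using mir_path_edge[OF sym_Q corner_labels_in_pm_set(1), of a0]
      mir_path_edge[OF sym_Q corner_labels_in_pm_set(2), of a0] lo hi by simp_all
qed

lemma path_edge_Q'_corner:
  "path_edge a0 n Q' (gen_lo k) = VE x y" "path_edge a0 n Q' (gen_hi k) = HE x y"
  "path_edge a0 n Q' (- gen_lo k) = HE y x" "path_edge a0 n Q' (- gen_hi k) = VE y x"
proof -
  have "Q' ! i = False" "Q' ! Suc i = True"
    using nth_Q' i_props(2,4) corner_indices_distinct by (simp_all add: Q'_bit_def)
  moreover have "dual_a a0 Q' i = x" "dual_a a0 Q' (Suc i) = x - 1"
    using dual_a_Q'[of i] dual_a_Q'[of "Suc i"] i_props(2,4) Q_corner corner_indices_distinct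
    by (simp_all add: Q'_shift_def)
  ultimately show lo: "path_edge a0 n Q' (gen_lo k) = VE x y"
    and hi: "path_edge a0 n Q' (gen_hi k) = HE x y"
    unfolding path_edge_def label_idx_corner
    using step_edge_eq[of i Q' a0 n] step_edge_eq[of "Suc i" Q' a0 n] length_Q' i_props(2,3,4) y_eq
    by simp_all
  show "path_edge a0 n Q' (- gen_lo k) = HE y x" "path_edge a0 n Q' (- gen_hi k) = VE y x"
    using mir_path_edge[OF sym_Q' corner_labels_in_pm_set(1), of a0]
      mir_path_edge[OF sym_Q' corner_labels_in_pm_set(2), of a0] lo hi by simp_all
qed

lemma path_edge_Q'_other:
  assumes j: "j \<in> pm_set n" "j \<notin> {gen_lo k, gen_hi k, - gen_lo k, - gen_hi k}"
  shows "path_edge a0 n Q' j = path_edge a0 n Q j"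
proof -
  define r where "r = label_idx n j"
  have r: "r < 2 * n"
    using label_idx_less[OF j(1)] by (simp add: r_def)
  have r_ne: "r \<noteq> label_idx n j'" if "j' \<in> {gen_lo k, gen_hi k, - gen_lo k, - gen_hi k}" for j'
  proof
    assume "r = label_idx n j'"
    then have "j = j'"
      using label_idx_inj[OF j(1)] corner_labels_in_pm_set that unfolding r_def by auto
    with j(2) that show False
      by simp
  qed
  have "r \<notin> {i, Suc i, 2 * n - 1 - i, 2 * n - 2 - i}"
    using r_ne[of "gen_lo k"] r_ne[of "gen_hi k"] r_ne[of "- gen_lo k"] r_ne[of "- gen_hi k"]
    unfolding label_idx_corner by simp
  then have "Q' ! r = Q ! r" "dual_a a0 Q' r = aQ r"
    using nth_Q'[OF r] dual_a_Q'[of r] r by (auto simp: Q'_bit_def Q'_shift_def)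
  then show ?thesis
    unfolding path_edge_def r_def[symmetric]
    using step_edge_eq[of r Q a0 n] step_edge_eq[of r Q' a0 n] r length_Q length_Q' by simp
qed

lemma HE_corner_in_dom_edges: "HE x y \<in> dom_edges a0 n P Q"
proof (cases "(x - 1, y) \<in> skew_dom a0 n P Q")
  case True
  then show ?thesis
    using corner_in unfolding dom_edges_def by auto
next
  case False
  have "nat (y - (x - 1) + int n) = Suc (Suc i)" "- int n \<le> y - (x - 1)" "y - (x - 1) \<le> int n"
    using i_props(3) y_eq k_less by auto
  then have "x - 1 \<le> aP (Suc (Suc i))"
    using False Q_corner unfolding skew_dom_iff by auto
  then have "aP (Suc i) = x - 1" "P ! Suc i"
    using dual_a_Suc[of "Suc i" P a0] dual_a_Suc_bounds[of "Suc i" P a0] length_P i_props(2)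
      dual_a_P_corner by (auto split: if_splits)
  then have "path_edge a0 n P (gen_hi k) = HE x y"
    unfolding path_edge_def label_idx_corner
    using step_edge_eq[of "Suc i" P a0 n] length_P i_props(2,3) y_eq by simp
  then show ?thesis
    using path_edge_in_dom_edges(1)[OF corner_labels_in_pm_set(2)] by metis
qed

lemma VE_corner_in_dom_edges: "VE x y \<in> dom_edges a0 n P Q"
proof (cases "(x, y - 1) \<in> skew_dom a0 n P Q")
  case True
  then show ?thesis
    using corner_in unfolding dom_edges_def by auto
next
  case False
  have "nat (y - 1 - x + int n) = i" "- int n \<le> y - 1 - x" "y - 1 - x \<le> int n"
    using i_props(3) y_eq k_less by auto
  then have "x \<le> aP i"
    using False Q_corner unfolding skew_dom_iff by auto
  then have "aP i = x" "\<not> P ! i"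
    using dual_a_Suc[of i P a0] dual_a_Suc_bounds[of i P a0] length_P i_props(4)
      dual_a_P_corner by (auto split: if_splits)
  then have "path_edge a0 n P (gen_lo k) = VE x y"
    unfolding path_edge_def label_idx_corner
    using step_edge_eq[of i P a0 n] length_P i_props(3,4) y_eq by simp
  then show ?thesis
    using path_edge_in_dom_edges(1)[OF corner_labels_in_pm_set(1)] by metis
qed

definition corner_exits where
  "corner_exits = {HE (x + 1) y, VE x (y + 1), VE y (x + 1), HE (y + 1) x}"

lemma corner_exits_eq: "corner_exits = path_edge a0 n Q ` {gen_lo k, gen_hi k, - gen_lo k, - gen_hi k}"
  unfolding corner_exits_def using path_edge_Q_corner by auto

lemma dom_edges_Q'_subset: "dom_edges a0 n P Q' \<subseteq> dom_edges a0 n P Q"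
proof -
  have "path_edge a0 n Q' j \<in> dom_edges a0 n P Q" if "j \<in> pm_set n" for j
  proof (cases "j \<in> {gen_lo k, gen_hi k, - gen_lo k, - gen_hi k}")
    case True
    then show ?thesis
      using HE_corner_in_dom_edges VE_corner_in_dom_edges path_edge_Q'_corner
        mir_in_dom_edges[OF PQ HE_corner_in_dom_edges] mir_in_dom_edges[OF PQ VE_corner_in_dom_edges]
      by auto
  next
    case False
    then show ?thesis
      using that path_edge_Q'_other path_edge_in_dom_edges(2) by metis
  qed
  then show ?thesis
    using skew_dom_Q'_subset unfolding dom_edges_def by blast
qed

lemma dom_edges_subset: "dom_edges a0 n P Q \<subseteq> dom_edges a0 n P Q' \<union> corner_exits"
proof -
  have corner_edges: "{HE x y, VE x y, HE y x, VE y x} \<subseteq> dom_edges a0 n P Q'"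
    using path_edge_in_dom_edges(2)[OF corner_labels_in_pm_set(1), of a0 Q' P]
      path_edge_in_dom_edges(2)[OF corner_labels_in_pm_set(2), of a0 Q' P]
      path_edge_in_dom_edges(2)[OF corner_labels_in_pm_set(3), of a0 Q' P]
      path_edge_in_dom_edges(2)[OF corner_labels_in_pm_set(4), of a0 Q' P]
    unfolding path_edge_Q'_corner by auto
  have Q_edge: "path_edge a0 n Q j \<in> dom_edges a0 n P Q' \<union> corner_exits" if "j \<in> pm_set n" for j
  proof (cases "j \<in> {gen_lo k, gen_hi k, - gen_lo k, - gen_hi k}")
    case True
    then show ?thesis
      unfolding corner_exits_eq by blast
  next
    case False
    then show ?thesis
      using path_edge_Q'_other[OF that False] path_edge_in_dom_edges(2)[OF that, of a0 Q' P] by simp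
  qed
  have HE_edge: "HE a b \<in> dom_edges a0 n P Q' \<union> corner_exits"
    if "(a - 1, b) \<in> skew_dom a0 n P Q" "(a, b) \<in> skew_dom a0 n P Q" for a b
  proof (cases "(a - 1, b) \<in> skew_dom a0 n P Q' \<and> (a, b) \<in> skew_dom a0 n P Q'")
    case True
    then show ?thesis
      unfolding dom_edges_def by blast
  next
    case False
    then have "(a - 1, b) = (x, y) \<or> (a - 1, b) = (y, x) \<or> (a, b) = (x, y) \<or> (a, b) = (y, x)"
      using that skew_dom_Q'_iff by blast
    then show ?thesis
      using corner_edges by (auto simp: corner_exits_def)
  qed
  have VE_edge: "VE a b \<in> dom_edges a0 n P Q' \<union> corner_exits"
    if "(a, b - 1) \<in> skew_dom a0 n P Q" "(a, b) \<in> skew_dom a0 n P Q" for a b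
  proof (cases "(a, b - 1) \<in> skew_dom a0 n P Q' \<and> (a, b) \<in> skew_dom a0 n P Q'")
    case True
    then show ?thesis
      unfolding dom_edges_def by blast
  next
    case False
    then have "(a, b - 1) = (x, y) \<or> (a, b - 1) = (y, x) \<or> (a, b) = (x, y) \<or> (a, b) = (y, x)"
      using that skew_dom_Q'_iff by blast
    then show ?thesis
      using corner_edges by (auto simp: corner_exits_def)
  qed
  show ?thesis
    unfolding dom_edges_def[of a0 n P Q]
    using Q_edge HE_edge VE_edge path_edge_in_dom_edges(1) by blast
qed

lemma corner_exits_subset: "corner_exits \<subseteq> dom_edges a0 n P Q"
  unfolding corner_exits_eq dom_edges_def using corner_labels_in_pm_set by auto

lemma HE_right_notin_Q': "HE (x + 1) y \<notin> dom_edges a0 n P Q'"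
proof -
  have "HE (x + 1) y \<noteq> step_edge a0 n R (label_idx n j)"
    if "R = P \<or> R = Q'" "j \<in> pm_set n" for R j
  proof
    assume edge: "HE (x + 1) y = step_edge a0 n R (label_idx n j)"
    have "label_idx n j < length R"
      using label_idx_less[OF that(2)] length_P length_Q' that(1) by auto
    from step_edge_HE_D[OF this edge[symmetric]]
    have "label_idx n j = i" "R ! label_idx n j" "dual_a a0 R (label_idx n j) = x"
      using i_props(3) y_eq by auto
    then have "R ! i" "dual_a a0 R i = x"
      by simp_all
    then show False
      using that(1) dual_a_Suc[of i P a0] length_P i_props(4) dual_a_P_corner nth_Q'
      by (auto simp: Q'_bit_def)
  qed
  then show ?thesis
    using corner_notin_Q' unfolding dom_edges_def path_edge_def by auto
qed

lemma VE_up_notin_Q': "VE x (y + 1) \<notin> dom_edges a0 n P Q'"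
proof -
  have "VE x (y + 1) \<noteq> step_edge a0 n R (label_idx n j)"
    if "R = P \<or> R = Q'" "j \<in> pm_set n" for R j
  proof
    assume edge: "VE x (y + 1) = step_edge a0 n R (label_idx n j)"
    have "label_idx n j < length R"
      using label_idx_less[OF that(2)] length_P length_Q' that(1) by auto
    from step_edge_VE_D[OF this edge[symmetric]]
    have "label_idx n j = Suc i" "\<not> R ! label_idx n j" "dual_a a0 R (label_idx n j) = x"
      using i_props(3) y_eq by auto
    then have "\<not> R ! Suc i" "dual_a a0 R (Suc i) = x"
      by simp_all
    then show False
      using that(1) dual_a_P_corner nth_Q' i_props(2) corner_indices_distinct
      by (auto simp: Q'_bit_def)
  qed
  then show ?thesis
    using corner_notin_Q' unfolding dom_edges_def path_edge_def by auto
qed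

lemma corner_exits_disjoint: "dom_edges a0 n P Q' \<inter> corner_exits = {}"
  using HE_right_notin_Q' VE_up_notin_Q' mir_in_dom_edges[OF skew_domain_Q', of "VE y (x + 1)"]
    mir_in_dom_edges[OF skew_domain_Q', of "HE (y + 1) x"]
  by (auto simp: corner_exits_def)

lemma dom_edges_eq: "dom_edges a0 n P Q = dom_edges a0 n P Q' \<union> corner_exits"
  using dom_edges_subset dom_edges_Q'_subset corner_exits_subset by blast

lemma vertex_edges_notin_corner_exits:
  assumes "(u, v) \<in> skew_dom a0 n P Q'"
  shows "{HE u v, VE u v, HE (u + 1) v, VE u (v + 1)} \<inter> corner_exits = {}"
  using assms skew_dom_Q'_subset corner_notin_Q' right_out up_out
    skew_dom_sym[OF PQ, of "y + 1" x] skew_dom_sym[OF PQ, of y "x + 1"]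
  by (auto simp: corner_exits_def)

abbreviation label_Q where "label_Q \<equiv> path_label a0 n Q"

lemma label_Q: "j \<in> pm_set n \<Longrightarrow> label_Q (path_edge a0 n Q j) = j"
  using path_label_path_edge[OF sym_Q] .

lemma corner_exits_label:
  "e \<in> corner_exits \<Longrightarrow>
     label_Q e \<in> {gen_lo k, gen_hi k, - gen_lo k, - gen_hi k} \<and> path_edge a0 n Q (label_Q e) = e"
  unfolding corner_exits_eq using label_Q corner_labels_in_pm_set by auto

lemma vweight_corner:
  "vweight q t \<nu> z c (x, y) = cross_weight (pxy q t \<nu> z x y) (qpar q t k)
     (c (HE x y)) (c (VE x y)) (c (HE (x + 1) y)) (c (VE x (y + 1)))"
  unfolding k_def by (rule vweight_eq_cross_weight)

definition colorings_via where
  "colorings_via \<sigma> \<pi> \<pi>' = {c \<in> colorings a0 n P Q \<sigma> \<pi>. \<forall>j\<in>pm_set n. c (path_edge a0 n Q' j) = \<pi>' j}"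

definition extend_coloring where
  "extend_coloring \<pi> c' e =
     (if e \<in> dom_edges a0 n P Q' then c' e else if e \<in> corner_exits then \<pi> (label_Q e) else undefined)"

lemma colorings_via_agree:
  assumes \<pi>: "\<pi> \<in> signed_perms n" and \<pi>': "\<pi>' \<in> signed_perms n" and c: "c \<in> colorings_via \<sigma> \<pi> \<pi>'"
    and j: "j \<notin> {gen_lo k, gen_hi k, - gen_lo k, - gen_hi k}"
  shows "\<pi>' j = \<pi> j"
proof (cases "j \<in> pm_set n")
  case True
  then have "c (path_edge a0 n Q' j) = \<pi>' j" "c (path_edge a0 n Q j) = \<pi> j"
    using c by (auto simp: colorings_via_def colorings_def)
  then show ?thesis
    using path_edge_Q'_other[OF True j] by simp
next
  case False
  then show ?thesis
    using signed_permsD(3)[OF \<pi>] signed_permsD(3)[OF \<pi>'] by simp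
qed

lemma extend_coloring_corner_exit:
  assumes j: "j \<in> {gen_lo k, gen_hi k, - gen_lo k, - gen_hi k}"
  shows "extend_coloring \<pi> c' (path_edge a0 n Q j) = \<pi> j"
proof -
  have "path_edge a0 n Q j \<in> corner_exits"
    using j unfolding corner_exits_eq by blast
  moreover have "label_Q (path_edge a0 n Q j) = j"
    using j label_Q corner_labels_in_pm_set by auto
  ultimately show ?thesis
    using corner_exits_disjoint by (auto simp: extend_coloring_def)
qed

lemma extend_coloring_right_up:
  "extend_coloring \<pi> c' (HE (x + 1) y) = \<pi> (gen_lo k)"
  "extend_coloring \<pi> c' (VE x (y + 1)) = \<pi> (gen_hi k)"
  using extend_coloring_corner_exit[of "gen_lo k" \<pi> c'] extend_coloring_corner_exit[of "gen_hi k" \<pi> c']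
  by (simp_all add: path_edge_Q_corner)

lemma extend_coloring_mir:
  assumes \<pi>: "\<pi> \<in> signed_perms n" and c': "c' \<in> colorings a0 n P Q' \<sigma> \<pi>'"
    and e: "e \<in> dom_edges a0 n P Q"
  shows "extend_coloring \<pi> c' (mir e) = - extend_coloring \<pi> c' e"
proof (cases "e \<in> dom_edges a0 n P Q'")
  case True
  then show ?thesis
    using c' mir_in_dom_edges[OF skew_domain_Q'] by (simp add: extend_coloring_def colorings_def)
next
  case False
  then have "e \<in> corner_exits"
    using e dom_edges_eq by blast
  then obtain j where j: "j \<in> {gen_lo k, gen_hi k, - gen_lo k, - gen_hi k}" "e = path_edge a0 n Q j"
    unfolding corner_exits_eq by blast
  then have mj: "- j \<in> {gen_lo k, gen_hi k, - gen_lo k, - gen_hi k}" "mir e = path_edge a0 n Q (- j)"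
    using mir_path_edge[OF sym_Q] corner_labels_in_pm_set by auto
  then have "extend_coloring \<pi> c' (mir e) = \<pi> (- j)"
    using extend_coloring_corner_exit[OF mj(1), of \<pi> c'] by simp
  also have "\<dots> = - \<pi> j"
    by (rule signed_permsD(2)[OF \<pi>])
  also have "\<dots> = - extend_coloring \<pi> c' e"
    using j extend_coloring_corner_exit[OF j(1), of \<pi> c'] by simp
  finally show ?thesis .
qed

lemma extend_coloring_in:
  assumes \<pi>: "\<pi> \<in> signed_perms n" and \<pi>': "\<pi>' \<in> signed_perms n"
    and agree: "\<forall>j. j \<notin> {gen_lo k, gen_hi k, - gen_lo k, - gen_hi k} \<longrightarrow> \<pi>' j = \<pi> j"
    and c': "c' \<in> colorings a0 n P Q' \<sigma> \<pi>'"
  shows "extend_coloring \<pi> c' \<in> colorings_via \<sigma> \<pi> \<pi>'"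
proof -
  have c'_E: "extend_coloring \<pi> c' e = c' e" if "e \<in> dom_edges a0 n P Q'" for e
    using that by (simp add: extend_coloring_def)
  have "extend_coloring \<pi> c' \<in> Pi\<^sub>E (dom_edges a0 n P Q) (\<lambda>_. pm_set n)"
    using c' dom_edges_eq corner_exits_label signed_perm_in_pm_set[OF \<pi>] corner_labels_in_pm_set
    by (fastforce simp: colorings_def extend_coloring_def PiE_iff extensional_def)
  moreover have "extend_coloring \<pi> c' (path_edge a0 n Q j) = \<pi> j" if "j \<in> pm_set n" for j
    using c' c'_E[OF path_edge_in_dom_edges(2)[OF that]] extend_coloring_corner_exit[of j \<pi> c']
      path_edge_Q'_other[OF that] agree that
    by (cases "j \<in> {gen_lo k, gen_hi k, - gen_lo k, - gen_hi k}") (auto simp: colorings_def)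
  ultimately show ?thesis
    using c' c'_E path_edge_in_dom_edges extend_coloring_mir[OF \<pi> c']
    by (simp add: colorings_via_def colorings_def)
qed

lemma restrict_in_colorings:
  assumes "c \<in> colorings_via \<sigma> \<pi> \<pi>'"
  shows "restrict c (dom_edges a0 n P Q') \<in> colorings a0 n P Q' \<sigma> \<pi>'"
  using assms dom_edges_Q'_subset mir_in_dom_edges[OF skew_domain_Q'] path_edge_in_dom_edges
  by (auto simp: colorings_via_def colorings_def PiE_iff)

lemma extend_restrict:
  assumes c: "c \<in> colorings_via \<sigma> \<pi> \<pi>'"
  shows "extend_coloring \<pi> (restrict c (dom_edges a0 n P Q')) = c"
proof
  fix e
  have c_ext: "c \<in> Pi\<^sub>E (dom_edges a0 n P Q) (\<lambda>_. pm_set n)"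
    and c_Q: "\<forall>j\<in>pm_set n. c (path_edge a0 n Q j) = \<pi> j"
    using c by (auto simp: colorings_via_def colorings_def)
  show "extend_coloring \<pi> (restrict c (dom_edges a0 n P Q')) e = c e"
  proof (cases "e \<in> corner_exits")
    case True
    then have "c e = \<pi> (label_Q e)"
      using corner_exits_label c_Q corner_labels_in_pm_set by (metis insert_iff singletonD)
    then show ?thesis
      using True corner_exits_disjoint by (auto simp: extend_coloring_def)
  next
    case False
    then show ?thesis
      using PiE_arb[OF c_ext] dom_edges_eq by (auto simp: extend_coloring_def)
  qed
qed

lemma restrict_extend:
  "c' \<in> colorings a0 n P Q' \<sigma> \<pi>' \<Longrightarrow> restrict (extend_coloring \<pi> c') (dom_edges a0 n P Q') = c'"
  by (auto simp: colorings_def extend_coloring_def PiE_iff extensional_def)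

lemma prod_vweight_extend_coloring:
  assumes c': "c' \<in> colorings a0 n P Q' \<sigma> \<pi>'"
  shows "(\<Prod>u\<in>domp a0 n P Q. vweight q t \<nu> z (extend_coloring \<pi> c') u)
       = cross_weight (pxy q t \<nu> z x y) (qpar q t k) (\<pi>' (gen_hi k)) (\<pi>' (gen_lo k)) (\<pi> (gen_lo k)) (\<pi> (gen_hi k))
         * (\<Prod>u\<in>domp a0 n P Q'. vweight q t \<nu> z c' u)"
proof -
  have c'_E: "extend_coloring \<pi> c' e = c' e" if "e \<in> dom_edges a0 n P Q'" for e
    using that by (simp add: extend_coloring_def)
  have "\<forall>j\<in>pm_set n. c' (path_edge a0 n Q' j) = \<pi>' j"
    using c' by (simp add: colorings_def)
  then have "c' (VE x y) = \<pi>' (gen_lo k)" "c' (HE x y) = \<pi>' (gen_hi k)"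
    using corner_labels_in_pm_set(1,2) path_edge_Q'_corner(1,2) by metis+
  moreover have "VE x y \<in> dom_edges a0 n P Q'" "HE x y \<in> dom_edges a0 n P Q'"
    using path_edge_in_dom_edges(2)[OF corner_labels_in_pm_set(1), of a0 Q' P]
      path_edge_in_dom_edges(2)[OF corner_labels_in_pm_set(2), of a0 Q' P]
    by (simp_all add: path_edge_Q'_corner)
  ultimately have "vweight q t \<nu> z (extend_coloring \<pi> c') (x, y)
      = cross_weight (pxy q t \<nu> z x y) (qpar q t k) (\<pi>' (gen_hi k)) (\<pi>' (gen_lo k)) (\<pi> (gen_lo k)) (\<pi> (gen_hi k))"
    unfolding vweight_corner extend_coloring_right_up by (simp add: c'_E)
  moreover have "vweight q t \<nu> z (extend_coloring \<pi> c') u = vweight q t \<nu> z c' u"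
    if u_in: "u \<in> domp a0 n P Q'" for u
  proof -
    obtain u1 u2 where u: "u = (u1, u2)" "(u1, u2) \<in> skew_dom a0 n P Q'"
      using u_in unfolding domp_def by blast
    show ?thesis
      unfolding u(1)
      using vertex_edges_notin_corner_exits[OF u(2)] PiE_arb[of c' "dom_edges a0 n P Q'" "\<lambda>_. pm_set n"] c'
      by (intro vweight_cong) (auto simp: extend_coloring_def colorings_def)
  qed
  moreover have "domp a0 n P Q = insert (x, y) (domp a0 n P Q')" "(x, y) \<notin> domp a0 n P Q'"
    using domp_Q' corner_in_domp by auto
  ultimately show ?thesis
    by (simp add: finite_domp)
qed

lemma sum_colorings_via:
  assumes \<pi>: "\<pi> \<in> signed_perms n" and \<pi>': "\<pi>' \<in> signed_perms n"
  shows "(\<Sum>c\<in>colorings_via \<sigma> \<pi> \<pi>'. \<Prod>u\<in>domp a0 n P Q. vweight q t \<nu> z c u)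
       = Pprob q t \<nu> z a0 n P Q' \<sigma> \<pi>' * hecke_weight k (pxy q t \<nu> z x y) (qpar q t k) \<pi>' \<pi>"
proof (cases "\<forall>j. j \<notin> {gen_lo k, gen_hi k, - gen_lo k, - gen_hi k} \<longrightarrow> \<pi>' j = \<pi> j")
  case True
  have "(\<Sum>c\<in>colorings_via \<sigma> \<pi> \<pi>'. \<Prod>u\<in>domp a0 n P Q. vweight q t \<nu> z c u)
      = (\<Sum>c'\<in>colorings a0 n P Q' \<sigma> \<pi>'. \<Prod>u\<in>domp a0 n P Q. vweight q t \<nu> z (extend_coloring \<pi> c') u)"
    by (rule sum.reindex_bij_witness[where j = "\<lambda>c. restrict c (dom_edges a0 n P Q')"
          and i = "extend_coloring \<pi>"])
      (use extend_restrict restrict_in_colorings restrict_extend extend_coloring_in[OF \<pi> \<pi>' True] in auto)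
  then show ?thesis
    using True by (simp add: prod_vweight_extend_coloring Pprob_eq_sum_colorings hecke_weight_def
        sum_distrib_right mult.commute)
next
  case False
  then have "colorings_via \<sigma> \<pi> \<pi>' = {}"
    using colorings_via_agree[OF \<pi> \<pi>'] by blast
  moreover have "hecke_weight k (pxy q t \<nu> z x y) (qpar q t k) \<pi>' \<pi> = 0"
    using False unfolding hecke_weight_def by (rule if_not_P)
  ultimately show ?thesis
    by simp
qed

lemma colorings_via_disjoint:
  assumes "\<pi>1 \<in> signed_perms n" "\<pi>2 \<in> signed_perms n" "\<pi>1 \<noteq> \<pi>2"
  shows "colorings_via \<sigma> \<pi> \<pi>1 \<inter> colorings_via \<sigma> \<pi> \<pi>2 = {}"
  using assms signed_perms_eqI[of \<pi>1 n \<pi>2] by (auto simp: colorings_via_def)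

text \<open>A colouring with non-zero weight at \<open>(x, y)\<close> exits \<open>A - {(x, y), (y, x)}\<close> through \<open>Q'\<close>
  either with \<open>\<pi>\<close> (the colours turn) or with \<open>\<pi> \<circ> s\<^sub>k\<close> (they go straight).\<close>
lemma colorings_nonzero_via:
  assumes c: "c \<in> colorings a0 n P Q \<sigma> \<pi>" and \<pi>: "\<pi> \<in> signed_perms n"
    and nz: "vweight q t \<nu> z c (x, y) \<noteq> 0"
  shows "c \<in> colorings_via \<sigma> \<pi> \<pi> \<or> c \<in> colorings_via \<sigma> \<pi> (\<pi> \<circ> gen k)"
proof -
  have c_mir: "\<forall>e\<in>dom_edges a0 n P Q. c (mir e) = - c e"
    and c_Q: "\<forall>j\<in>pm_set n. c (path_edge a0 n Q j) = \<pi> j"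
    using c by (auto simp: colorings_def)
  have exits: "c (HE (x + 1) y) = \<pi> (gen_lo k)" "c (VE x (y + 1)) = \<pi> (gen_hi k)"
    using c_Q corner_labels_in_pm_set path_edge_Q_corner by metis+
  have mirrors: "c (HE y x) = - c (VE x y)" "c (VE y x) = - c (HE x y)"
    using c_mir VE_corner_in_dom_edges HE_corner_in_dom_edges by (metis mir.simps)+
  have via: "c \<in> colorings_via \<sigma> \<pi> \<rho>"
    if \<rho>: "\<rho> \<in> signed_perms n" and lo: "\<rho> (gen_lo k) = c (VE x y)" and hi: "\<rho> (gen_hi k) = c (HE x y)"
      and agree: "\<forall>j. j \<notin> {gen_lo k, gen_hi k, - gen_lo k, - gen_hi k} \<longrightarrow> \<rho> j = \<pi> j" for \<rho>
  proof -
    have "c (path_edge a0 n Q' j) = \<rho> j" if j: "j \<in> pm_set n" for j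
    proof (cases "j \<in> {gen_lo k, gen_hi k, - gen_lo k, - gen_hi k}")
      case True
      then show ?thesis
        using path_edge_Q'_corner mirrors lo hi
          signed_permsD(2)[OF \<rho>, of "gen_lo k"] signed_permsD(2)[OF \<rho>, of "gen_hi k"] by auto
    next
      case False
      then show ?thesis
        using c_Q j path_edge_Q'_other[OF j False] agree by simp
    qed
    then show ?thesis
      using c by (simp add: colorings_via_def)
  qed
  from nz have "(c (HE (x + 1) y) = c (HE x y) \<and> c (VE x (y + 1)) = c (VE x y))
      \<or> (c (HE (x + 1) y) = c (VE x y) \<and> c (VE x (y + 1)) = c (HE x y))"
    unfolding vweight_corner by (rule cross_weight_nonzero)
  then show ?thesis
  proof
    assume "c (HE (x + 1) y) = c (HE x y) \<and> c (VE x (y + 1)) = c (VE x y)"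
    then have "c \<in> colorings_via \<sigma> \<pi> (\<pi> \<circ> gen k)"
      using exits gen_fixes comp_signed_perms[OF \<pi> gen_signed_perms[OF k_less]] by (intro via) auto
    then show ?thesis ..
  next
    assume "c (HE (x + 1) y) = c (VE x y) \<and> c (VE x (y + 1)) = c (HE x y)"
    then have "c \<in> colorings_via \<sigma> \<pi> \<pi>"
      using exits \<pi> by (intro via) auto
    then show ?thesis ..
  qed
qed

text \<open>Splitting the colourings of \<open>A\<close> according to their exit data through \<open>Q'\<close>.\<close>
lemma Pprob_remove_corner:
  assumes \<pi>: "\<pi> \<in> signed_perms n"
  shows "Pprob q t \<nu> z a0 n P Q \<sigma> \<pi>
       = (\<Sum>\<pi>'\<in>signed_perms n. Pprob q t \<nu> z a0 n P Q' \<sigma> \<pi>' * hecke_weight k (pxy q t \<nu> z x y) (qpar q t k) \<pi>' \<pi>)"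
proof -
  define F where "F c = (\<Prod>u\<in>domp a0 n P Q. vweight q t \<nu> z c u)" for c
  have finite_via: "finite (colorings_via \<sigma> \<pi> \<pi>')" for \<pi>'
    using finite_colorings[of a0 n P Q \<sigma> \<pi>] by (rule finite_subset[rotated]) (auto simp: colorings_via_def)
  have "(\<Sum>\<pi>'\<in>signed_perms n. Pprob q t \<nu> z a0 n P Q' \<sigma> \<pi>' * hecke_weight k (pxy q t \<nu> z x y) (qpar q t k) \<pi>' \<pi>)
      = (\<Sum>\<pi>'\<in>signed_perms n. \<Sum>c\<in>colorings_via \<sigma> \<pi> \<pi>'. F c)"
    unfolding F_def by (rule sum.cong[OF refl], rule sum_colorings_via[OF \<pi>, symmetric])
  also have "\<dots> = (\<Sum>c\<in>(\<Union>\<pi>'\<in>signed_perms n. colorings_via \<sigma> \<pi> \<pi>'). F c)"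
    by (rule sum.UNION_disjoint[symmetric, OF finite_signed_perms]) (simp_all add: finite_via colorings_via_disjoint)
  also have "\<dots> = (\<Sum>c\<in>colorings a0 n P Q \<sigma> \<pi>. F c)"
  proof (rule sum.mono_neutral_left[OF finite_colorings])
    show "(\<Union>\<pi>'\<in>signed_perms n. colorings_via \<sigma> \<pi> \<pi>') \<subseteq> colorings a0 n P Q \<sigma> \<pi>"
      by (auto simp: colorings_via_def)
    show "\<forall>c\<in>colorings a0 n P Q \<sigma> \<pi> - (\<Union>\<pi>'\<in>signed_perms n. colorings_via \<sigma> \<pi> \<pi>'). F c = 0"
    proof
      fix c
      assume "c \<in> colorings a0 n P Q \<sigma> \<pi> - (\<Union>\<pi>'\<in>signed_perms n. colorings_via \<sigma> \<pi> \<pi>')"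
      then have c: "c \<in> colorings a0 n P Q \<sigma> \<pi>" "c \<notin> colorings_via \<sigma> \<pi> \<pi>"
        "c \<notin> colorings_via \<sigma> \<pi> (\<pi> \<circ> gen k)"
        using \<pi> comp_signed_perms[OF \<pi> gen_signed_perms[OF k_less]] by auto
      have "vweight q t \<nu> z c (x, y) = 0"
        using colorings_nonzero_via[OF c(1) \<pi>] c(2,3) by blast
      then show "F c = 0"
        unfolding F_def by (intro prod_zero finite_domp) (use corner_in_domp in blast)
    qed
  qed
  also have "\<dots> = Pprob q t \<nu> z a0 n P Q \<sigma> \<pi>"
    unfolding Pprob_eq_sum_colorings F_def ..
  finally show ?thesis ..
qed

end

section \<open>Induction along the admissible order\<close>

lemma (in corner) rmulR_sum_Pprob:
  "rmulR n q t k (pxy q t \<nu> z x y) (\<lambda>w. \<Sum>\<pi>\<in>signed_perms n. Pprob q t \<nu> z a0 n P Q' \<sigma> \<pi> * Tb \<pi> w) w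
     = (\<Sum>\<pi>\<in>signed_perms n. Pprob q t \<nu> z a0 n P Q \<sigma> \<pi> * Tb \<pi> w)"
proof (cases "w \<in> signed_perms n")
  case True
  have "rmulR n q t k (pxy q t \<nu> z x y) (\<lambda>w. \<Sum>\<pi>\<in>signed_perms n. Pprob q t \<nu> z a0 n P Q' \<sigma> \<pi> * Tb \<pi> w) w
      = (\<Sum>\<pi>'\<in>signed_perms n. Pprob q t \<nu> z a0 n P Q' \<sigma> \<pi>' * rmulR n q t k (pxy q t \<nu> z x y) (Tb \<pi>') w)"
    by (rule rmulR_sum_Tb)
  also have "\<dots> = (\<Sum>\<pi>'\<in>signed_perms n. Pprob q t \<nu> z a0 n P Q' \<sigma> \<pi>' * hecke_weight k (pxy q t \<nu> z x y) (qpar q t k) \<pi>' w)"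
    by (intro sum.cong refl) (simp add: rmulR_Tb_eq_hecke_weight[OF True _ k_less])
  also have "\<dots> = Pprob q t \<nu> z a0 n P Q \<sigma> w"
    by (rule Pprob_remove_corner[OF True, symmetric])
  also have "\<dots> = (\<Sum>\<pi>\<in>signed_perms n. Pprob q t \<nu> z a0 n P Q \<sigma> \<pi> * Tb \<pi> w)"
    using True by (simp add: sum_Tb_apply finite_signed_perms)
  finally show ?thesis .
next
  case False
  have "(\<Sum>\<pi>'\<in>signed_perms n. Pprob q t \<nu> z a0 n P Q' \<sigma> \<pi>' * rmulR n q t k (pxy q t \<nu> z x y) (Tb \<pi>') w) = 0"
    by (rule sum.neutral) (simp add: rmulR_Tb_outside[OF False _ k_less])
  then show ?thesis
    unfolding rmulR_sum_Tb using False by (simp add: sum_Tb_apply finite_signed_perms)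
qed

lemma admissible_order_snoc_maximal:
  assumes "admissible_order S (L @ [v])" and "w \<in> S" "fst v \<le> fst w" "snd v \<le> snd w"
  shows "w = v"
proof -
  obtain j where j: "j < length (L @ [v])" "(L @ [v]) ! j = w"
    using assms(1,2) by (metis admissible_order_def in_set_conv_nth)
  then have "length L \<le> j"
    using assms(1,3,4) unfolding admissible_order_def by (metis length_append_singleton lessI nth_append_length)
  with j have "j = length L"
    by simp
  with j show ?thesis by simp
qed

lemma admissible_order_butlast:
  assumes "admissible_order S (L @ [v])"
  shows "admissible_order (S - {v}) L"
  using assms unfolding admissible_order_def
  by (auto simp: nth_append)

lemma admissible_order_last_corner:
  assumes PQ: "skew_domain n P Q" and adm: "admissible_order (domp a0 n P Q) (L @ [(x, y)])"
  shows "corner a0 n P Q x y"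
proof
  have "(x, y) \<in> domp a0 n P Q"
    using adm by (auto simp: admissible_order_def)
  then show "(x, y) \<in> skew_dom a0 n P Q" "x \<le> y"
    by (auto simp: domp_def)
  show "(x, y + 1) \<notin> skew_dom a0 n P Q"
    using admissible_order_snoc_maximal[OF adm, of "(x, y + 1)"] \<open>x \<le> y\<close> by (auto simp: domp_def)
  show "(x + 1, y) \<notin> skew_dom a0 n P Q"
  proof
    assume right: "(x + 1, y) \<in> skew_dom a0 n P Q"
    show False
    proof (cases "x = y")
      case True
      then have "(x, x + 1) \<in> domp a0 n P Q"
        using skew_dom_sym[OF PQ right] by (simp add: domp_def)
      then show False
        using admissible_order_snoc_maximal[OF adm, of "(x, x + 1)"] True by simp
    next
      case False
      then show False
        using admissible_order_snoc_maximal[OF adm, of "(x + 1, y)"] right \<open>x \<le> y\<close> by (simp add: domp_def)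
    qed
  qed
qed (rule PQ)

lemma skew_dom_empty_if_domp_empty:
  "skew_domain n P Q \<Longrightarrow> domp a0 n P Q = {} \<Longrightarrow> skew_dom a0 n P Q = {}"
  using skew_dom_sym by (auto simp: domp_def) (metis linorder_le_cases)

lemma skew_domain_domp_empty_imp_eq:
  assumes PQ: "skew_domain n P Q" and empty: "domp a0 n P Q = {}"
  shows "Q = P"
proof -
  have "skew_dom a0 n P Q = {}"
    using skew_dom_empty_if_domp_empty[OF PQ empty] .
  then have cnt: "cntL Q m = cntL P m" if "m \<le> 2 * n" for m
    using PQ that skew_dom_iff[of "dual_a a0 Q m" "dual_a a0 Q m + int m - int n" a0 n P Q]
    by (fastforce simp: skew_domain_def dual_a_def)
  have len: "length Q = 2 * n" "length P = 2 * n"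
    using PQ by (auto simp: skew_domain_def sym_path_length)
  show ?thesis
  proof (rule nth_equalityI)
    fix r
    assume "r < length Q"
    then show "Q ! r = P ! r"
      using cntL_Suc[of r Q] cntL_Suc[of r P] cnt[of r] cnt[of "Suc r"] len by (auto split: if_splits)
  qed (simp add: len)
qed

lemma Pprob_empty_domain:
  assumes PQ: "skew_domain n P Q" and empty: "domp a0 n P Q = {}"
    and \<sigma>: "\<sigma> \<in> signed_perms n" and \<pi>: "\<pi> \<in> signed_perms n"
  shows "Pprob q t \<nu> z a0 n P Q \<sigma> \<pi> = (if \<pi> = \<sigma> then 1 else 0)"
proof -
  have Q: "Q = P"
    using skew_domain_domp_empty_imp_eq[OF assms(1,2)] .
  have P: "sym_path n P"
    using PQ by (simp add: skew_domain_def)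
  have "skew_dom a0 n P P = {}"
    using skew_dom_empty_if_domp_empty[OF PQ empty] Q by simp
  then have edges: "dom_edges a0 n P P = path_edge a0 n P ` pm_set n"
    unfolding dom_edges_def by auto
  show ?thesis
  proof (cases "\<pi> = \<sigma>")
    case False
    then obtain j where "j \<in> pm_set n" "\<pi> j \<noteq> \<sigma> j"
      using signed_perms_eqI[OF \<pi> \<sigma>] by blast
    then have "colorings a0 n P P \<sigma> \<pi> = {}"
      by (auto simp: colorings_def)
    then show ?thesis
      using False by (simp add: Pprob_eq_sum_colorings Q)
  next
    case True
    define c0 where "c0 e = (if e \<in> path_edge a0 n P ` pm_set n then \<sigma> (path_label a0 n P e) else undefined)" for e
    have c0: "c0 (path_edge a0 n P j) = \<sigma> j" if "j \<in> pm_set n" for j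
      using that path_label_path_edge[OF P that] by (auto simp: c0_def)
    have "colorings a0 n P P \<sigma> \<pi> = {c0}"
    proof (intro equalityI subsetI)
      fix c
      assume "c \<in> colorings a0 n P P \<sigma> \<pi>"
      then have "c = c0"
        using c0 by (auto simp: colorings_def edges PiE_iff extensional_def c0_def fun_eq_iff)
      then show "c \<in> {c0}" by simp
    next
      fix c
      assume "c \<in> {c0}"
      then show "c \<in> colorings a0 n P P \<sigma> \<pi>"
        using c0 True signed_perm_in_pm_set[OF \<sigma>] mir_path_edge[OF P] uminus_in_pm_set signed_permsD(2)[OF \<sigma>]
        by (auto simp: colorings_def edges PiE_iff extensional_def c0_def)
    qed
    then show ?thesis
      using True empty by (simp add: Pprob_eq_sum_colorings Q)
  qed
qed

lemma mulY_Tb_eq_sum_Pprob: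
  assumes "skew_domain n P Q" "\<sigma> \<in> signed_perms n" "admissible_order (domp a0 n P Q) L"
  shows "mulY n q t \<nu> z L (Tb \<sigma>) = (\<lambda>w. \<Sum>\<pi>\<in>signed_perms n. Pprob q t \<nu> z a0 n P Q \<sigma> \<pi> * Tb \<pi> w)"
  using assms
proof (induction L arbitrary: Q rule: rev_induct)
  case Nil
  then have "domp a0 n P Q = {}"
    by (simp add: admissible_order_def)
  then have "Pprob q t \<nu> z a0 n P Q \<sigma> w = Tb \<sigma> w" if "w \<in> signed_perms n" for w
    using Pprob_empty_domain[OF Nil.prems(1) _ Nil.prems(2) that] by (auto simp: Tb_def)
  then show ?case
    unfolding sum_Tb_apply[OF finite_signed_perms] using Nil.prems(2) by (auto simp: mulY_def Tb_def)
next
  case (snoc v L)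
  obtain x y where v: "v = (x, y)"
    by fastforce
  interpret corner a0 n P Q x y
    using admissible_order_last_corner snoc.prems(1,3) v by blast
  have "admissible_order (domp a0 n P Q') L"
    using admissible_order_butlast snoc.prems(3) v domp_Q' by simp
  then have IH: "mulY n q t \<nu> z L (Tb \<sigma>) = (\<lambda>w. \<Sum>\<pi>\<in>signed_perms n. Pprob q t \<nu> z a0 n P Q' \<sigma> \<pi> * Tb \<pi> w)"
    using snoc.IH skew_domain_Q' snoc.prems(2) by blast
  show ?case
    unfolding v mulY_snoc k_def[symmetric] IH
    by (rule ext) (rule rmulR_sum_Pprob)
qed

text \<open>\<open>Y\<^sub>A\<close> and \<open>P\<^sub>A\<close> are built from the same weights \<open>pxy\<close>.\<close>
theorem proposition2p3:
  fixes q t \<nu> :: "'a::field" and z :: "int \<Rightarrow> 'a"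
    and n :: nat and a0 :: int and P Q :: "bool list"
    and \<sigma> :: "int \<Rightarrow> int" and L :: "(int \<times> int) list"
  assumes dom: "skew_domain n P Q"
    and pos: "\<forall>(x, y) \<in> skew_dom a0 n P Q. 1 \<le> x \<and> 1 \<le> y"
    and sig: "\<sigma> \<in> signed_perms n"
    and ord: "admissible_order (domp a0 n P Q) L"
    and nu: "\<nu> \<noteq> 0"
    and gen1: "\<forall>(x, y) \<in> domp a0 n P Q. x \<noteq> y \<longrightarrow> z x * z y \<noteq> q"
    and gen2: "\<forall>(x, y) \<in> domp a0 n P Q. x = y \<longrightarrow> z x - \<nu> * t \<noteq> 0 \<and> z x + 1 / \<nu> \<noteq> 0"
  shows "\<forall>v. mulY n q t \<nu> z L (Tb \<sigma>) v
            = (\<Sum>\<pi> \<in> signed_perms n. Pprob q t \<nu> z a0 n P Q \<sigma> \<pi> * Tb \<pi> v)"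
  by (simp add: mulY_Tb_eq_sum_Pprob[OF dom sig ord])

end
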